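(* Let $u$ and $v$ be two prime words such that $u<_{lex}v$. Then $u^\alpha<_{lex}u^\alpha v\le_{lex}v$ for every ordinal $\alpha$.
   Context: $A$ is a finite alphabet with a linear order $<_A$. Words are sequences of letters indexed by countable ordinals, $x^\alpha$ is the concatenation of $\alpha$ copies of $x$. A suffix of $x$ is $x[\gamma,|x|)$, proper if $0<\gamma<|x|$. Write $x<_{str}x'$ if there are letters $a<_Ab$ and words $y,z,z'$ with $x=yaz$, $x'=ybz'$; $x\le_{lex}x'$ iff $x$ is a prefix of $x'$ or $x<_{str}x'$; $<_{lex}$ is its strict version. A word is primitive if $x=y^\alpha$ implies $\alpha=1$ and $y=x$; $w$ is prime if it is primitive and every proper suffix $z$ satisfies $w\le_{lex}z$. *)

theory Defs
  imports Main "HOL-Library.Nat_Bijection"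
begin

text \<open>Transfinite words: positions form a well-ordered subset of nat (hence a
countable ordinal), given by a well-order relation; letters assigned to positions.
Two representations denote the same word iff they are letter-preserving order-isomorphic.\<close>

type_synonym 'a tword = "nat rel \<times> (nat \<Rightarrow> 'a)"

definition is_word :: "'a tword \<Rightarrow> bool" where
  "is_word x \<longleftrightarrow> Well_order (fst x)"

definition word_eq :: "'a tword \<Rightarrow> 'a tword \<Rightarrow> bool" where
  "word_eq x y \<longleftrightarrow> (\<exists>f. iso (fst x) (fst y) f \<and> (\<forall>i\<in>Field (fst x). snd y (f i) = snd x i))"

definition empty_word :: "'a tword \<Rightarrow> bool" where
  "empty_word x \<longleftrightarrow> Field (fst x) = {}"

definition letter :: "'a \<Rightarrow> 'a tword" where
  "letter a = ({(0,0)}, \<lambda>_. a)"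

definition wconcat :: "'a tword \<Rightarrow> 'a tword \<Rightarrow> 'a tword" where
  "wconcat x y =
     ({(2*i, 2*j) | i j. (i,j) \<in> fst x} \<union> {(2*i+1, 2*j+1) | i j. (i,j) \<in> fst y}
      \<union> {(2*i, 2*j+1) | i j. i \<in> Field (fst x) \<and> j \<in> Field (fst y)},
      \<lambda>n. if even n then snd x (n div 2) else snd y (n div 2))"

text \<open>Power x^alpha for a countable ordinal alpha (a well-order on a subset of nat):
  alpha copies of x, position p of copy k encoded as prod_encode (k,p).\<close>
definition wpow :: "'a tword \<Rightarrow> nat rel \<Rightarrow> 'a tword" where
  "wpow x \<alpha> =
     ({(prod_encode (k,p), prod_encode (k',p')) | k p k' p'.
         k \<in> Field \<alpha> \<and> k' \<in> Field \<alpha> \<and> p \<in> Field (fst x) \<and> p' \<in> Field (fst x) \<and>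
         ((k \<noteq> k' \<and> (k,k') \<in> \<alpha>) \<or> (k = k' \<and> (p,p') \<in> fst x))},
      \<lambda>n. snd x (snd (prod_decode n)))"

definition is_prefix :: "'a tword \<Rightarrow> 'a tword \<Rightarrow> bool" where
  "is_prefix x x' \<longleftrightarrow> (\<exists>z. is_word z \<and> word_eq x' (wconcat x z))"

definition str_less :: "'a::linorder tword \<Rightarrow> 'a tword \<Rightarrow> bool" where
  "str_less x x' \<longleftrightarrow> (\<exists>y a b z z'. a < b \<and> is_word y \<and> is_word z \<and> is_word z' \<and>
      word_eq x (wconcat y (wconcat (letter a) z)) \<and> word_eq x' (wconcat y (wconcat (letter b) z')))"

definition lex_le :: "'a::linorder tword \<Rightarrow> 'a tword \<Rightarrow> bool" where
  "lex_le x x' \<longleftrightarrow> is_prefix x x' \<or> str_less x x'"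

definition lex_less :: "'a::linorder tword \<Rightarrow> 'a tword \<Rightarrow> bool" where
  "lex_less x x' \<longleftrightarrow> lex_le x x' \<and> \<not> word_eq x x'"

text \<open>z is a proper suffix x[gamma,|x|) with 0 < gamma < |x|, i.e. x = y z with y, z nonempty.\<close>
definition proper_suffix :: "'a tword \<Rightarrow> 'a tword \<Rightarrow> bool" where
  "proper_suffix z x \<longleftrightarrow> is_word z \<and> \<not> empty_word z \<and>
     (\<exists>y. is_word y \<and> \<not> empty_word y \<and> word_eq x (wconcat y z))"

definition primitive :: "'a tword \<Rightarrow> bool" where
  "primitive x \<longleftrightarrow> (\<forall>y \<alpha>. is_word y \<and> Well_order \<alpha> \<and> word_eq x (wpow y \<alpha>) \<longrightarrow>
      card (Field \<alpha>) = 1 \<and> word_eq y x)"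

definition prime_word :: "'a::linorder tword \<Rightarrow> bool" where
  "prime_word w \<longleftrightarrow> is_word w \<and> primitive w \<and> (\<forall>z. proper_suffix z w \<longrightarrow> lex_le w z)"

end

theory Submission
  imports Defs
begin

text \<open>
  Write \<open>P = u\<^sup>\<alpha>\<close>. A primitive word is nonempty, so \<open>P\<close> is a proper prefix of \<open>P v\<close>.
  For \<open>P v \<le>\<^sub>l\<^sub>e\<^sub>x v\<close> with \<open>\<alpha> \<noteq> 0\<close>: if \<open>u <\<^sub>s\<^sub>t\<^sub>r v\<close>, the first mismatch of \<open>u\<close> and \<open>v\<close> is also one of
  \<open>P v = u \<dots>\<close> and \<open>v\<close>. Otherwise \<open>v = u t\<close>, and the two remaining cases, \<open>v <\<^sub>s\<^sub>t\<^sub>r P v\<close>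
  and \<open>v\<close> a proper prefix of \<open>P v\<close>, are excluded by Levi's lemma: either \<open>v = P z\<close>, or the
  cut falls inside one copy of \<open>u\<close> in \<open>P\<close>, which gives \<open>v = u\<^sup>\<beta> f\<close> with \<open>u = f g\<close>. Either
  way \<open>v\<close> gets a nonempty suffix that is strictly smaller than \<open>v\<close> or is a proper prefix
  of \<open>v\<close>, which contradicts primality of \<open>v\<close> (unless \<open>v\<close> is a power of \<open>u \<noteq> v\<close>, which
  contradicts its primitivity).

  A factorisation \<open>w = x y\<close>
  is a cut of \<open>w\<close>, that is, an initial segment of its positions; Levi's lemma holds because
  the initial segments of a well-order are linearly ordered by inclusion.
\<close>

lemma Well_order_refl: "Well_order r \<Longrightarrow> a \<in> Field r \<Longrightarrow> (a, a) \<in> r"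
  by (simp add: well_order_on_def linear_order_on_def partial_order_on_def preorder_on_def refl_on_def)

lemma Well_order_trans: "Well_order r \<Longrightarrow> (a, b) \<in> r \<Longrightarrow> (b, c) \<in> r \<Longrightarrow> (a, c) \<in> r"
  unfolding well_order_on_def linear_order_on_def partial_order_on_def preorder_on_def trans_def
  by blast

lemma Well_order_antisym: "Well_order r \<Longrightarrow> (a, b) \<in> r \<Longrightarrow> (b, a) \<in> r \<Longrightarrow> a = b"
  unfolding well_order_on_def linear_order_on_def partial_order_on_def antisym_def by blast

lemma Well_order_total:
  "Well_order r \<Longrightarrow> a \<in> Field r \<Longrightarrow> b \<in> Field r \<Longrightarrow> (a, b) \<in> r \<or> (b, a) \<in> r"
  by (cases "a = b") (auto simp: Well_order_refl well_order_on_def linear_order_on_def total_on_def)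

lemma Well_order_least:
  "Well_order r \<Longrightarrow> A \<subseteq> Field r \<Longrightarrow> A \<noteq> {} \<Longrightarrow> \<exists>a\<in>A. \<forall>b\<in>A. (a, b) \<in> r"
  using Linear_order_Well_order_iff well_order_on_def by blast

lemma Well_orderI:
  assumes trans: "\<And>a b c. (a, b) \<in> r \<Longrightarrow> (b, c) \<in> r \<Longrightarrow> (a, c) \<in> r"
    and antisym: "\<And>a b. (a, b) \<in> r \<Longrightarrow> (b, a) \<in> r \<Longrightarrow> a = b"
    and least: "\<And>A. A \<subseteq> Field r \<Longrightarrow> A \<noteq> {} \<Longrightarrow> \<exists>a\<in>A. \<forall>b\<in>A. (a, b) \<in> r"
  shows "Well_order r"
proof -
  have "refl_on (Field r) r"
    unfolding refl_on_def using least[of "{a}" for a] by auto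
  moreover have "total_on (Field r) r"
    unfolding total_on_def using least[of "{a, b}" for a b] by auto
  moreover have "r \<subseteq> Field r \<times> Field r"
    by (auto intro: FieldI1 FieldI2)
  ultimately have "Linear_order r"
    using trans antisym
    unfolding linear_order_on_def partial_order_on_def preorder_on_def trans_def antisym_def
    by blast
  with least show ?thesis
    using Linear_order_Well_order_iff by blast
qed

lemma Field_Restr_Well_order:
  assumes "Well_order r" shows "Field (Restr r S) = S \<inter> Field r"
  using Well_order_refl[OF assms] by (auto simp: Field_def)

section \<open>Isomorphism and restriction of words\<close>

lemma is_word_Well_order: "is_word x \<Longrightarrow> Well_order (fst x)"
  by (simp add: is_word_def)

definition word_iso :: "'a tword \<Rightarrow> 'a tword \<Rightarrow> (nat \<Rightarrow> nat) \<Rightarrow> bool" where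
  "word_iso x y g \<longleftrightarrow> bij_betw g (Field (fst x)) (Field (fst y)) \<and>
     (\<forall>a\<in>Field (fst x). \<forall>b\<in>Field (fst x). (a, b) \<in> fst x \<longleftrightarrow> (g a, g b) \<in> fst y) \<and>
     (\<forall>a\<in>Field (fst x). snd y (g a) = snd x a)"

lemma word_eq_iff_word_iso: "word_eq x y \<longleftrightarrow> (\<exists>g. word_iso x y g)"
  unfolding word_eq_def word_iso_def iso_iff2 by blast

lemma word_isoD:
  assumes "word_iso x y g"
  shows "inj_on g (Field (fst x))" "g ` Field (fst x) = Field (fst y)"
    "\<And>a. a \<in> Field (fst x) \<Longrightarrow> g a \<in> Field (fst y)"
    "\<And>a b. a \<in> Field (fst x) \<Longrightarrow> b \<in> Field (fst x) \<Longrightarrow> (g a, g b) \<in> fst y \<longleftrightarrow> (a, b) \<in> fst x"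
    "\<And>a. a \<in> Field (fst x) \<Longrightarrow> snd y (g a) = snd x a"
  using assms unfolding word_iso_def bij_betw_def by auto

definition wrestrict :: "'a tword \<Rightarrow> nat set \<Rightarrow> 'a tword" where
  "wrestrict x S = (Restr (fst x) S, snd x)"

lemma fst_wrestrict: "fst (wrestrict x S) = Restr (fst x) S"
  and snd_wrestrict [simp]: "snd (wrestrict x S) = snd x"
  by (simp_all add: wrestrict_def)

lemma wrestrict_Field [simp]: "wrestrict x (Field (fst x)) = x"
  by (simp add: wrestrict_def Restr_Field)

lemma wrestrict_wrestrict: "T \<subseteq> S \<Longrightarrow> wrestrict (wrestrict x S) T = wrestrict x T"
  by (auto simp: wrestrict_def)

lemma is_word_wrestrict: "is_word x \<Longrightarrow> is_word (wrestrict x S)"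
  by (simp add: is_word_def wrestrict_def Well_order_Restr)

lemma Field_wrestrict: "is_word x \<Longrightarrow> Field (fst (wrestrict x S)) = S \<inter> Field (fst x)"
  by (simp add: is_word_def fst_wrestrict Field_Restr_Well_order)

lemma word_eq_wrestrictI:
  assumes "is_word x" "is_word y" "S \<subseteq> Field (fst x)" "T \<subseteq> Field (fst y)"
    and "bij_betw g S T"
    and "\<And>a b. a \<in> S \<Longrightarrow> b \<in> S \<Longrightarrow> (g a, g b) \<in> fst y \<longleftrightarrow> (a, b) \<in> fst x"
    and "\<And>a. a \<in> S \<Longrightarrow> snd y (g a) = snd x a"
  shows "word_eq (wrestrict x S) (wrestrict y T)"
proof -
  have "Field (fst (wrestrict x S)) = S" "Field (fst (wrestrict y T)) = T"
    using assms(1-4) Field_wrestrict by blast+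
  with assms(5-7) have "word_iso (wrestrict x S) (wrestrict y T) g"
    unfolding word_iso_def bij_betw_def by (auto simp: fst_wrestrict)
  thus ?thesis
    using word_eq_iff_word_iso by blast
qed

lemma word_eqI:
  assumes "is_word x" "is_word y" "bij_betw g (Field (fst x)) (Field (fst y))"
    and "\<And>a b. a \<in> Field (fst x) \<Longrightarrow> b \<in> Field (fst x) \<Longrightarrow> (g a, g b) \<in> fst y \<longleftrightarrow> (a, b) \<in> fst x"
    and "\<And>a. a \<in> Field (fst x) \<Longrightarrow> snd y (g a) = snd x a"
  shows "word_eq x y"
  using word_eq_wrestrictI[OF assms(1,2) order_refl order_refl assms(3-5)] by simp

lemma word_eq_refl: "is_word x \<Longrightarrow> word_eq x x"
  by (rule word_eqI[where g = id]) auto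

lemma word_eq_sym: assumes "word_eq x y" shows "word_eq y x"
proof -
  obtain g where g: "word_iso x y g"
    using assms word_eq_iff_word_iso by blast
  let ?h = "inv_into (Field (fst x)) g"
  have h: "?h a \<in> Field (fst x)" "g (?h a) = a" if "a \<in> Field (fst y)" for a
    using that word_isoD(2)[OF g] by (auto simp: inv_into_into f_inv_into_f)
  have "bij_betw ?h (Field (fst y)) (Field (fst x))"
    using g unfolding word_iso_def by (simp add: bij_betw_inv_into)
  moreover have "(?h a, ?h b) \<in> fst x \<longleftrightarrow> (a, b) \<in> fst y"
    if "a \<in> Field (fst y)" "b \<in> Field (fst y)" for a b
    using word_isoD(4)[OF g, of "?h a" "?h b"] h that by simp
  moreover have "snd x (?h a) = snd y a" if "a \<in> Field (fst y)" for a
    using word_isoD(5)[OF g, of "?h a"] h that by simp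
  ultimately have "word_iso y x ?h"
    unfolding word_iso_def by blast
  thus ?thesis
    using word_eq_iff_word_iso by blast
qed

lemma word_eq_trans [trans]: assumes "word_eq x y" "word_eq y z" shows "word_eq x z"
proof -
  obtain g h where g: "word_iso x y g" and h: "word_iso y z h"
    using assms word_eq_iff_word_iso by blast
  have "bij_betw (h \<circ> g) (Field (fst x)) (Field (fst z))"
    using g h unfolding word_iso_def using bij_betw_trans by blast
  moreover have "((h \<circ> g) a, (h \<circ> g) b) \<in> fst z \<longleftrightarrow> (a, b) \<in> fst x"
    if "a \<in> Field (fst x)" "b \<in> Field (fst x)" for a b
    using that word_isoD(3,4)[OF g] word_isoD(4)[OF h] by simp
  moreover have "snd z ((h \<circ> g) a) = snd x a" if "a \<in> Field (fst x)" for a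
    using that word_isoD(3,5)[OF g] word_isoD(5)[OF h] by simp
  ultimately have "word_iso x z (h \<circ> g)"
    unfolding word_iso_def by blast
  thus ?thesis
    using word_eq_iff_word_iso by blast
qed

lemma word_eq_wrestrict_image:
  assumes "is_word x" "is_word y" "word_iso x y g" "S \<subseteq> Field (fst x)"
  shows "word_eq (wrestrict x S) (wrestrict y (g ` S))"
proof (rule word_eq_wrestrictI[OF assms(1,2,4)])
  show "g ` S \<subseteq> Field (fst y)" "bij_betw g S (g ` S)"
    using assms(4) word_isoD(1,3)[OF assms(3)] inj_on_subset by (fastforce simp: bij_betw_def)+
qed (use assms(4) word_isoD(4,5)[OF assms(3)] in blast)+

lemma word_eq_empty_word: "word_eq x y \<Longrightarrow> empty_word x \<longleftrightarrow> empty_word y"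
  unfolding word_eq_iff_word_iso word_iso_def empty_word_def bij_betw_def by auto

lemma empty_word_word_eq: "empty_word x \<Longrightarrow> empty_word y \<Longrightarrow> word_eq x y"
  unfolding word_eq_iff_word_iso word_iso_def empty_word_def by (auto intro!: exI[of _ id])

section \<open>Concatenation\<close>

definition inl_pos :: "nat \<Rightarrow> nat" where "inl_pos i = 2 * i"
definition inr_pos :: "nat \<Rightarrow> nat" where "inr_pos j = Suc (2 * j)"

lemma inl_inr_pos_simps [simp]:
  "inl_pos i = inl_pos i' \<longleftrightarrow> i = i'" "inr_pos j = inr_pos j' \<longleftrightarrow> j = j'"
  "inl_pos i \<noteq> inr_pos j" "inr_pos j \<noteq> inl_pos i"
  by (auto simp: inl_pos_def inr_pos_def) presburger+

lemma inl_inr_pos_cases: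
  obtains i where "n = inl_pos i" | j where "n = inr_pos j"
proof (cases "even n")
  case True
  then show ?thesis using that(1) unfolding inl_pos_def by (auto elim: evenE)
next
  case False
  then show ?thesis using that(2) unfolding inr_pos_def by (auto elim: oddE)
qed

lemma wconcat_rel_simps [simp]:
  "(inl_pos i, inl_pos i') \<in> fst (wconcat x y) \<longleftrightarrow> (i, i') \<in> fst x"
  "(inr_pos j, inr_pos j') \<in> fst (wconcat x y) \<longleftrightarrow> (j, j') \<in> fst y"
  "(inl_pos i, inr_pos j) \<in> fst (wconcat x y) \<longleftrightarrow> i \<in> Field (fst x) \<and> j \<in> Field (fst y)"
  "(inr_pos j, inl_pos i) \<notin> fst (wconcat x y)"
  by (auto simp: wconcat_def inl_pos_def inr_pos_def) presburger+

lemma snd_wconcat_simps [simp]: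
  "snd (wconcat x y) (inl_pos i) = snd x i" "snd (wconcat x y) (inr_pos j) = snd y j"
  by (simp_all add: wconcat_def inl_pos_def inr_pos_def)

lemma Field_wconcat:
  "Field (fst (wconcat x y)) = inl_pos ` Field (fst x) \<union> inr_pos ` Field (fst y)"
proof
  show "Field (fst (wconcat x y)) \<subseteq> inl_pos ` Field (fst x) \<union> inr_pos ` Field (fst y)"
  proof
    fix n assume "n \<in> Field (fst (wconcat x y))"
    then obtain m where "(n, m) \<in> fst (wconcat x y) \<or> (m, n) \<in> fst (wconcat x y)"
      unfolding Field_def by blast
    thus "n \<in> inl_pos ` Field (fst x) \<union> inr_pos ` Field (fst y)"
      by (cases n rule: inl_inr_pos_cases; cases m rule: inl_inr_pos_cases) (auto intro: FieldI1 FieldI2)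
  qed
  show "inl_pos ` Field (fst x) \<union> inr_pos ` Field (fst y) \<subseteq> Field (fst (wconcat x y))"
  proof -
    have "inl_pos i \<in> Field (fst (wconcat x y))" if i: "i \<in> Field (fst x)" for i
    proof -
      obtain i' where "(i, i') \<in> fst x \<or> (i', i) \<in> fst x"
        using i unfolding Field_def by blast
      hence "(inl_pos i, inl_pos i') \<in> fst (wconcat x y) \<or> (inl_pos i', inl_pos i) \<in> fst (wconcat x y)"
        by simp
      thus ?thesis
        by (blast intro: FieldI1 FieldI2)
    qed
    moreover have "inr_pos j \<in> Field (fst (wconcat x y))" if j: "j \<in> Field (fst y)" for j
    proof -
      obtain j' where "(j, j') \<in> fst y \<or> (j', j) \<in> fst y"
        using j unfolding Field_def by blast
      hence "(inr_pos j, inr_pos j') \<in> fst (wconcat x y) \<or> (inr_pos j', inr_pos j) \<in> fst (wconcat x y)"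
        by simp
      thus ?thesis
        by (blast intro: FieldI1 FieldI2)
    qed
    ultimately show ?thesis
      by blast
  qed
qed

lemma Field_wconcat_simps [simp]:
  "inl_pos i \<in> Field (fst (wconcat x y)) \<longleftrightarrow> i \<in> Field (fst x)"
  "inr_pos j \<in> Field (fst (wconcat x y)) \<longleftrightarrow> j \<in> Field (fst y)"
  by (auto simp: Field_wconcat)

lemma Field_wconcat_cases:
  assumes "n \<in> Field (fst (wconcat x y))"
  obtains i where "n = inl_pos i" "i \<in> Field (fst x)" | j where "n = inr_pos j" "j \<in> Field (fst y)"
  using assms unfolding Field_wconcat by blast

lemma wconcat_rel_iff:
  "(m, n) \<in> fst (wconcat x y) \<longleftrightarrow>
     (\<exists>i i'. m = inl_pos i \<and> n = inl_pos i' \<and> (i, i') \<in> fst x) \<or>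
     (\<exists>j j'. m = inr_pos j \<and> n = inr_pos j' \<and> (j, j') \<in> fst y) \<or>
     (\<exists>i j. m = inl_pos i \<and> n = inr_pos j \<and> i \<in> Field (fst x) \<and> j \<in> Field (fst y))"
  by (cases m rule: inl_inr_pos_cases; cases n rule: inl_inr_pos_cases) simp_all

lemma is_word_wconcat:
  assumes "is_word x" "is_word y" shows "is_word (wconcat x y)"
  unfolding is_word_def
proof (rule Well_orderI)
  have X: "Well_order (fst x)" and Y: "Well_order (fst y)"
    using assms is_word_def by blast+
  show "(a, c) \<in> fst (wconcat x y)"
    if "(a, b) \<in> fst (wconcat x y)" "(b, c) \<in> fst (wconcat x y)" for a b c
    using that Well_order_trans[OF X] Well_order_trans[OF Y]
    unfolding wconcat_rel_iff by (auto intro: FieldI1 FieldI2)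
  show "a = b" if "(a, b) \<in> fst (wconcat x y)" "(b, a) \<in> fst (wconcat x y)" for a b
    using that Well_order_antisym[OF X] Well_order_antisym[OF Y]
    unfolding wconcat_rel_iff by auto
  show "\<exists>a\<in>A. \<forall>b\<in>A. (a, b) \<in> fst (wconcat x y)"
    if A: "A \<subseteq> Field (fst (wconcat x y))" "A \<noteq> {}" for A
  proof (cases "\<exists>i. inl_pos i \<in> A")
    case True
    have "{i. inl_pos i \<in> A} \<subseteq> Field (fst x)"
      using A(1) by auto
    then obtain i where i: "inl_pos i \<in> A" "\<forall>i'. inl_pos i' \<in> A \<longrightarrow> (i, i') \<in> fst x"
      using Well_order_least[OF X, of "{i. inl_pos i \<in> A}"] True by auto
    have "(inl_pos i, b) \<in> fst (wconcat x y)" if "b \<in> A" for b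
      using that i A(1) by (cases b rule: inl_inr_pos_cases) (auto intro: FieldI1)
    thus ?thesis
      using i(1) by blast
  next
    case False
    have "{j. inr_pos j \<in> A} \<subseteq> Field (fst y)" "{j. inr_pos j \<in> A} \<noteq> {}"
      using A False by (auto elim: Field_wconcat_cases)
    then obtain j where j: "inr_pos j \<in> A" "\<forall>j'. inr_pos j' \<in> A \<longrightarrow> (j, j') \<in> fst y"
      using Well_order_least[OF Y, of "{j. inr_pos j \<in> A}"] by auto
    have "(inr_pos j, b) \<in> fst (wconcat x y)" if "b \<in> A" for b
      using that j A(1) False by (cases b rule: inl_inr_pos_cases) auto
    thus ?thesis
      using j(1) by blast
  qed
qed

lemma word_eq_wrestrict_inl:
  assumes "is_word x" "is_word y"
  shows "word_eq x (wrestrict (wconcat x y) (inl_pos ` Field (fst x)))"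
proof -
  have "word_eq (wrestrict x (Field (fst x))) (wrestrict (wconcat x y) (inl_pos ` Field (fst x)))"
    by (rule word_eq_wrestrictI[OF assms(1) is_word_wconcat[OF assms], where g = inl_pos])
      (auto simp: bij_betw_def inj_on_def)
  thus ?thesis
    by simp
qed

lemma word_eq_wrestrict_inr:
  assumes "is_word x" "is_word y"
  shows "word_eq y (wrestrict (wconcat x y) (inr_pos ` Field (fst y)))"
proof -
  have "word_eq (wrestrict y (Field (fst y))) (wrestrict (wconcat x y) (inr_pos ` Field (fst y)))"
    by (rule word_eq_wrestrictI[OF assms(2) is_word_wconcat[OF assms], where g = inr_pos])
      (auto simp: bij_betw_def inj_on_def)
  thus ?thesis
    by simp
qed

lemma ofilter_inl_pos: "ofilter (fst (wconcat x y)) (inl_pos ` Field (fst x))"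
proof -
  have "m \<in> inl_pos ` Field (fst x)" if "(m, inl_pos i) \<in> fst (wconcat x y)" for m i
    using that by (cases m rule: inl_inr_pos_cases) (auto intro: FieldI1)
  thus ?thesis
    unfolding ofilter_def under_def Field_wconcat by blast
qed

lemma Field_wconcat_diff_inl:
  "Field (fst (wconcat x y)) - inl_pos ` Field (fst x) = inr_pos ` Field (fst y)"
  unfolding Field_wconcat by auto

lemma word_eq_wconcatI:
  assumes w: "is_word w" and S: "ofilter (fst w) S"
    and x: "word_eq (wrestrict w S) x" and y: "word_eq (wrestrict w (Field (fst w) - S)) y"
  shows "word_eq w (wconcat x y)"
proof -
  have W: "Well_order (fst w)"
    using w is_word_Well_order by blast
  have SF: "S \<subseteq> Field (fst w)" and down: "\<And>a b. (a, b) \<in> fst w \<Longrightarrow> b \<in> S \<Longrightarrow> a \<in> S"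
    using S unfolding ofilter_def under_def by blast+
  obtain g where g: "word_iso (wrestrict w S) x g"
    using x word_eq_iff_word_iso by blast
  obtain h where h: "word_iso (wrestrict w (Field (fst w) - S)) y h"
    using y word_eq_iff_word_iso by blast
  have FS: "Field (fst (wrestrict w S)) = S" "Field (fst (wrestrict w (Field (fst w) - S))) = Field (fst w) - S"
    using Field_wrestrict[OF w] SF by auto
  note gD = word_isoD[OF g, unfolded FS] and hD = word_isoD[OF h, unfolded FS]
  define f where "f n = (if n \<in> S then inl_pos (g n) else inr_pos (h n))" for n
  have "inj_on f (Field (fst w))"
    using gD(1) hD(1) unfolding inj_on_def f_def by auto
  moreover have "f ` Field (fst w) = Field (fst (wconcat x y))"
  proof -
    have "f ` Field (fst w) = inl_pos ` g ` S \<union> inr_pos ` h ` (Field (fst w) - S)"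
      using SF unfolding f_def by (auto simp: image_iff)
    thus ?thesis
      unfolding gD(2) hD(2) Field_wconcat .
  qed
  moreover have "(f a, f b) \<in> fst (wconcat x y) \<longleftrightarrow> (a, b) \<in> fst w"
    if a: "a \<in> Field (fst w)" and b: "b \<in> Field (fst w)" for a b
  proof (cases "a \<in> S"; cases "b \<in> S")
    assume "a \<in> S" "b \<notin> S"
    moreover have "(a, b) \<in> fst w"
      using Well_order_total[OF W a b] down \<open>a \<in> S\<close> \<open>b \<notin> S\<close> by blast
    ultimately show ?thesis
      using a b gD(3) hD(3) by (simp add: f_def)
  next
    assume "a \<notin> S" "b \<in> S"
    thus ?thesis
      using down by (auto simp: f_def)
  qed (use a b gD(4) hD(4) in \<open>auto simp: f_def fst_wrestrict\<close>)
  moreover have "snd (wconcat x y) (f a) = snd w a" if "a \<in> Field (fst w)" for a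
    using that gD(5) hD(5) by (simp add: f_def)
  ultimately have "word_iso w (wconcat x y) f"
    unfolding word_iso_def bij_betw_def by blast
  thus ?thesis
    using word_eq_iff_word_iso by blast
qed

lemma word_eq_wconcat:
  assumes "word_eq x x'" "word_eq y y'" "is_word x" "is_word y"
  shows "word_eq (wconcat x y) (wconcat x' y')"
proof (rule word_eq_wconcatI[OF is_word_wconcat[OF assms(3,4)] ofilter_inl_pos])
  show "word_eq (wrestrict (wconcat x y) (inl_pos ` Field (fst x))) x'"
    using word_eq_trans[OF word_eq_sym[OF word_eq_wrestrict_inl[OF assms(3,4)]] assms(1)] .
  show "word_eq (wrestrict (wconcat x y) (Field (fst (wconcat x y)) - inl_pos ` Field (fst x))) y'"
    unfolding Field_wconcat_diff_inl
    using word_eq_trans[OF word_eq_sym[OF word_eq_wrestrict_inr[OF assms(3,4)]] assms(2)] .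
qed

lemma empty_word_wconcat_iff: "empty_word (wconcat x y) \<longleftrightarrow> empty_word x \<and> empty_word y"
  by (simp add: empty_word_def Field_wconcat)

definition empty_tword :: "'a tword" where
  "empty_tword = ({}, \<lambda>_. undefined)"

lemma is_word_empty_tword: "is_word empty_tword"
  unfolding is_word_def empty_tword_def by (rule Well_orderI) (auto simp: Field_def)

lemma empty_word_empty_tword: "empty_word empty_tword"
  by (simp add: empty_word_def empty_tword_def)

lemma wconcat_empty_left:
  assumes "empty_word e" "is_word e" "is_word y"
  shows "word_eq (wconcat e y) y"
proof -
  have "Field (fst (wconcat e y)) = inr_pos ` Field (fst y)"
    using assms(1) by (simp add: empty_word_def Field_wconcat)
  hence "wrestrict (wconcat e y) (inr_pos ` Field (fst y)) = wconcat e y"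
    using wrestrict_Field[of "wconcat e y"] by simp
  thus ?thesis
    using word_eq_sym[OF word_eq_wrestrict_inr[OF assms(2,3)]] by simp
qed

lemma wconcat_empty_right:
  assumes "empty_word e" "is_word x" "is_word e"
  shows "word_eq (wconcat x e) x"
proof -
  have "Field (fst (wconcat x e)) = inl_pos ` Field (fst x)"
    using assms(1) by (simp add: empty_word_def Field_wconcat)
  hence "wrestrict (wconcat x e) (inl_pos ` Field (fst x)) = wconcat x e"
    using wrestrict_Field[of "wconcat x e"] by simp
  thus ?thesis
    using word_eq_sym[OF word_eq_wrestrict_inl[OF assms(2,3)]] by simp
qed

lemma wconcat_assoc: "word_eq (wconcat (wconcat x y) z) (wconcat x (wconcat y z))"
proof -
  let ?l = "wconcat (wconcat x y) z" and ?r = "wconcat x (wconcat y z)"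
  define f where "f n = (if even n then (if even (n div 2) then inl_pos (n div 2 div 2)
      else inr_pos (inl_pos (n div 2 div 2))) else inr_pos (inr_pos (n div 2)))" for n :: nat
  define f' where "f' n = (if even n then inl_pos (inl_pos (n div 2)) else (if even (n div 2)
      then inl_pos (inr_pos (n div 2 div 2)) else inr_pos (n div 2 div 2)))" for n :: nat
  have pos_div [simp]: "inl_pos i div 2 = i" "inr_pos i div 2 = i" "even (inl_pos i)" "odd (inr_pos i)" for i
    by (simp_all add: inl_pos_def inr_pos_def)
  have f [simp]: "f (inl_pos (inl_pos i)) = inl_pos i" "f (inl_pos (inr_pos i)) = inr_pos (inl_pos i)"
    "f (inr_pos i) = inr_pos (inr_pos i)" for i
    by (simp_all add: f_def)
  have f' [simp]: "f' (inl_pos i) = inl_pos (inl_pos i)" "f' (inr_pos (inl_pos i)) = inl_pos (inr_pos i)"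
    "f' (inr_pos (inr_pos i)) = inr_pos i" for i
    by (simp_all add: f'_def)
  have "bij_betw f (Field (fst ?l)) (Field (fst ?r))"
    by (rule bij_betw_byWitness[where f' = f']) (auto elim!: Field_wconcat_cases)
  moreover have "(f a, f b) \<in> fst ?r \<longleftrightarrow> (a, b) \<in> fst ?l"
    if "a \<in> Field (fst ?l)" "b \<in> Field (fst ?l)" for a b
    using that by (auto elim!: Field_wconcat_cases)
  moreover have "snd ?r (f a) = snd ?l a" if "a \<in> Field (fst ?l)" for a
    using that by (auto elim!: Field_wconcat_cases)
  ultimately have "word_iso ?l ?r f"
    unfolding word_iso_def by blast
  thus ?thesis
    using word_eq_iff_word_iso by blast
qed

section \<open>Cuts and Levi's lemma\<close>

lemma word_eq_wconcat_cut:
  assumes "is_word w" "ofilter (fst w) S"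
  shows "word_eq w (wconcat (wrestrict w S) (wrestrict w (Field (fst w) - S)))"
  using assms word_eq_wconcatI word_eq_refl is_word_wrestrict by blast

lemma word_eq_wrestrict_split:
  assumes w: "is_word w" and "S \<subseteq> T" "T \<subseteq> Field (fst w)"
    and down: "\<And>m n. (m, n) \<in> fst w \<Longrightarrow> m \<in> T \<Longrightarrow> n \<in> S \<Longrightarrow> m \<in> S"
  shows "word_eq (wrestrict w T) (wconcat (wrestrict w S) (wrestrict w (T - S)))"
proof -
  have F: "Field (fst (wrestrict w T)) = T"
    using Field_wrestrict[OF w] \<open>T \<subseteq> Field (fst w)\<close> by blast
  have "ofilter (fst (wrestrict w T)) S"
    unfolding ofilter_def under_def F using \<open>S \<subseteq> T\<close> down by (auto simp: fst_wrestrict)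
  thus ?thesis
    using word_eq_wconcat_cut[of "wrestrict w T" S] is_word_wrestrict[OF w] \<open>S \<subseteq> T\<close> F
    by (simp add: wrestrict_wrestrict)
qed

lemma image_Collect_mem: "B \<subseteq> g ` A \<Longrightarrow> g ` {a \<in> A. g a \<in> B} = B"
  by auto

lemma word_eq_wconcat_cutE:
  assumes w: "is_word w" and x: "is_word x" and y: "is_word y" and eq: "word_eq w (wconcat x y)"
  obtains S where "ofilter (fst w) S" "word_eq x (wrestrict w S)"
    "word_eq y (wrestrict w (Field (fst w) - S))"
proof -
  let ?xy = "wconcat x y"
  obtain g where g: "word_iso w ?xy g"
    using eq word_eq_iff_word_iso by blast
  note gD = word_isoD[OF g]
  define S where "S = {n \<in> Field (fst w). g n \<in> inl_pos ` Field (fst x)}"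
  have gS: "g ` S = inl_pos ` Field (fst x)"
    unfolding S_def using gD(2) by (intro image_Collect_mem) (auto simp: Field_wconcat)
  have "Field (fst w) - S = {n \<in> Field (fst w). g n \<in> inr_pos ` Field (fst y)}"
    using gD(3) unfolding S_def Field_wconcat by auto
  hence gS': "g ` (Field (fst w) - S) = inr_pos ` Field (fst y)"
    using gD(2) by (simp, intro image_Collect_mem) (auto simp: Field_wconcat)
  have "m \<in> S" if mn: "(m, n) \<in> fst w" and n: "n \<in> S" for m n
  proof -
    have mF: "m \<in> Field (fst w)" and nF: "n \<in> Field (fst w)"
      using mn by (auto intro: FieldI1 FieldI2)
    obtain i where i: "g n = inl_pos i"
      using n unfolding S_def by blast
    have "(g m, inl_pos i) \<in> fst ?xy"
      using gD(4)[OF mF nF] mn i by simp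
    hence "g m \<in> inl_pos ` Field (fst x)"
      by (cases "g m" rule: inl_inr_pos_cases) (auto intro: FieldI1)
    thus "m \<in> S"
      unfolding S_def using mF by blast
  qed
  hence "ofilter (fst w) S"
    unfolding ofilter_def under_def S_def by blast
  moreover have "word_eq x (wrestrict w S)"
    using word_eq_trans[OF word_eq_wrestrict_inl[OF x y, folded gS]
        word_eq_sym[OF word_eq_wrestrict_image[OF w is_word_wconcat[OF x y] g]]]
    unfolding S_def by simp
  moreover have "word_eq y (wrestrict w (Field (fst w) - S))"
    using word_eq_trans[OF word_eq_wrestrict_inr[OF x y, folded gS']
        word_eq_sym[OF word_eq_wrestrict_image[OF w is_word_wconcat[OF x y] g]]]
    by simp
  ultimately show ?thesis
    using that by blast
qed

text \<open>A well-order is not isomorphic to its restriction to a proper initial segment.\<close>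

lemma word_eq_wconcat_self_imp_empty:
  assumes x: "is_word x" and e: "is_word e" and eq: "word_eq x (wconcat x e)"
  shows "empty_word e"
proof (rule ccontr)
  assume ne: "\<not> empty_word e"
  let ?W = "wconcat x e" and ?S = "inl_pos ` Field (fst x)"
  have W: "Well_order (fst ?W)"
    using is_word_Well_order[OF is_word_wconcat[OF x e]] .
  have "word_eq (wrestrict ?W ?S) ?W"
    using word_eq_trans[OF word_eq_sym[OF word_eq_wrestrict_inl[OF x e]] eq] .
  hence "(Restr (fst ?W) ?S, fst ?W) \<in> ordIso"
    unfolding ordIso_def word_eq_def using W Well_order_Restr[OF W] by (auto simp: fst_wrestrict)
  moreover have "?S < Field (fst ?W)"
  proof -
    obtain j where "j \<in> Field (fst e)"
      using ne unfolding empty_word_def by blast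
    hence "inr_pos j \<in> Field (fst ?W) - ?S"
      by auto
    thus ?thesis
      unfolding Field_wconcat by blast
  qed
  ultimately show False
    using ofilter_ordLess[OF W ofilter_inl_pos] not_ordLess_ordIso by blast
qed

lemma word_eq_wrestrict_nested_cuts:
  assumes w: "is_word w" and S: "ofilter (fst w) S" and T: "ofilter (fst w) T" and "S \<subseteq> T"
  shows "word_eq (wrestrict w T) (wconcat (wrestrict w S) (wrestrict w (T - S)))"
    and "word_eq (wrestrict w (Field (fst w) - S))
      (wconcat (wrestrict w (T - S)) (wrestrict w (Field (fst w) - T)))"
proof -
  have down: "m \<in> U" if "ofilter (fst w) U" "(m, n) \<in> fst w" "n \<in> U" for U m n
    using that unfolding ofilter_def under_def by blast
  have TF: "T \<subseteq> Field (fst w)"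
    using T unfolding ofilter_def by blast
  show "word_eq (wrestrict w T) (wconcat (wrestrict w S) (wrestrict w (T - S)))"
    using word_eq_wrestrict_split[OF w \<open>S \<subseteq> T\<close> TF down[OF S]] .
  have "word_eq (wrestrict w (Field (fst w) - S))
      (wconcat (wrestrict w (T - S)) (wrestrict w ((Field (fst w) - S) - (T - S))))"
    by (rule word_eq_wrestrict_split[OF w]) (use TF down[OF T] in auto)
  moreover have "(Field (fst w) - S) - (T - S) = Field (fst w) - T"
    using \<open>S \<subseteq> T\<close> by blast
  ultimately show "word_eq (wrestrict w (Field (fst w) - S))
      (wconcat (wrestrict w (T - S)) (wrestrict w (Field (fst w) - T)))"
    by simp
qed

lemma word_eq_wconcat_wconcatE:
  assumes a: "is_word a" and b: "is_word b" and c: "is_word c" and d: "is_word d"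
    and eq: "word_eq (wconcat a b) (wconcat c d)"
  obtains e where "is_word e" "word_eq c (wconcat a e)" "word_eq b (wconcat e d)"
  | e where "is_word e" "\<not> empty_word e" "word_eq a (wconcat c e)" "word_eq d (wconcat e b)"
proof -
  let ?W = "wconcat a b" and ?S = "inl_pos ` Field (fst a)"
  have w: "is_word ?W"
    using is_word_wconcat[OF a b] .
  let ?F = "Field (fst ?W)" and ?R = "wrestrict ?W"
  have wR: "is_word (?R U)" for U
    using is_word_wrestrict[OF w] .
  obtain T where T: "ofilter (fst ?W) T" and cT: "word_eq c (?R T)" and dT: "word_eq d (?R (?F - T))"
    using word_eq_wconcat_cutE[OF w c d eq] .
  have S: "ofilter (fst ?W) ?S"
    by (rule ofilter_inl_pos)
  have aS: "word_eq a (?R ?S)" and bS: "word_eq b (?R (?F - ?S))"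
    using word_eq_wrestrict_inl[OF a b] word_eq_wrestrict_inr[OF a b]
    unfolding Field_wconcat_diff_inl by simp_all
  have "?S \<subseteq> T \<or> T \<subset> ?S"
    using wo_rel.ofilter_linord[OF _ S T] is_word_Well_order[OF w] by (auto simp: wo_rel_def)
  thus ?thesis
  proof
    assume "?S \<subseteq> T"
    note split = word_eq_wrestrict_nested_cuts[OF w S T this]
    have "word_eq c (wconcat a (?R (T - ?S)))"
      using word_eq_trans[OF cT word_eq_trans[OF split(1)
            word_eq_wconcat[OF word_eq_sym[OF aS] word_eq_refl[OF wR] wR wR]]] .
    moreover have "word_eq b (wconcat (?R (T - ?S)) d)"
      using word_eq_trans[OF bS word_eq_trans[OF split(2)
            word_eq_wconcat[OF word_eq_refl[OF wR] word_eq_sym[OF dT] wR wR]]] .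
    ultimately show ?thesis
      using that(1) wR by blast
  next
    assume "T \<subset> ?S"
    hence "T \<subseteq> ?S" and ne: "\<not> empty_word (?R (?S - T))"
      using Field_wrestrict[OF w, of "?S - T"] S unfolding empty_word_def ofilter_def by blast+
    note split = word_eq_wrestrict_nested_cuts[OF w T S this(1)]
    have "word_eq a (wconcat c (?R (?S - T)))"
      using word_eq_trans[OF aS word_eq_trans[OF split(1)
            word_eq_wconcat[OF word_eq_sym[OF cT] word_eq_refl[OF wR] wR wR]]] .
    moreover have "word_eq d (wconcat (?R (?S - T)) b)"
      using word_eq_trans[OF dT word_eq_trans[OF split(2)
            word_eq_wconcat[OF word_eq_refl[OF wR] word_eq_sym[OF bS] wR wR]]] .
    ultimately show ?thesis
      using that(2) wR ne by blast
  qed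
qed

lemma word_eq_wconcat_cancel_left:
  assumes a: "is_word a" and b: "is_word b" and c: "is_word c"
    and eq: "word_eq (wconcat a b) (wconcat a c)"
  shows "word_eq b c"
  using a b a c eq
proof (rule word_eq_wconcat_wconcatE)
  fix e assume e: "is_word e" "word_eq a (wconcat a e)" "word_eq b (wconcat e c)"
  show ?thesis
    using word_eq_trans[OF e(3) wconcat_empty_left[OF word_eq_wconcat_self_imp_empty[OF a e(1,2)] e(1) c]] .
next
  fix e assume e: "is_word e" "\<not> empty_word e" "word_eq a (wconcat a e)"
  thus ?thesis
    using word_eq_wconcat_self_imp_empty[OF a] by blast
qed

section \<open>First letters and comparison of words\<close>

lemma Field_letter [simp]: "Field (fst (letter a)) = {0}"
  by (simp add: letter_def Field_def)

lemma fst_letter [simp]: "fst (letter a) = {(0, 0)}"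
  by (simp add: letter_def)

lemma snd_letter [simp]: "snd (letter a) n = a"
  by (simp add: letter_def)

lemma is_word_letter: "is_word (letter a)"
  unfolding is_word_def letter_def by (rule Well_orderI) (auto simp: Field_def)

lemma not_empty_word_letter [simp]: "\<not> empty_word (letter a)"
  by (simp add: empty_word_def)

definition starts_with :: "'a tword \<Rightarrow> 'a \<Rightarrow> bool" where
  "starts_with x a \<longleftrightarrow> (\<exists>r. is_word r \<and> word_eq x (wconcat (letter a) r))"

lemma word_eq_letter_wconcat_least:
  assumes x: "is_word x" and m: "m \<in> Field (fst x)" "\<forall>n\<in>Field (fst x). (m, n) \<in> fst x"
  shows "word_eq x (wconcat (letter (snd x m)) (wrestrict x (Field (fst x) - {m})))"
proof -
  have X: "Well_order (fst x)"
    using is_word_Well_order[OF x] .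
  have Fm: "Field (fst (wrestrict x {m})) = {m}"
    using Field_wrestrict[OF x] m(1) by auto
  have "ofilter (fst x) {m}"
    unfolding ofilter_def under_def using m Well_order_antisym[OF X] by (auto intro: FieldI1)
  hence "word_eq x (wconcat (wrestrict x {m}) (wrestrict x (Field (fst x) - {m})))"
    by (rule word_eq_wconcat_cut[OF x])
  moreover have "word_eq (wrestrict x {m}) (letter (snd x m))"
    by (rule word_eqI[OF is_word_wrestrict[OF x] is_word_letter, where g = "\<lambda>_. 0"])
      (use Well_order_refl[OF X m(1)] in \<open>auto simp: Fm bij_betw_def fst_wrestrict\<close>)
  ultimately show ?thesis
    using word_eq_trans word_eq_wconcat[OF _ word_eq_refl] is_word_wrestrict[OF x] by blast
qed

lemma starts_with_exists:
  assumes "is_word x" "\<not> empty_word x"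
  obtains a where "starts_with x a"
proof -
  obtain m where "m \<in> Field (fst x)" "\<forall>n\<in>Field (fst x). (m, n) \<in> fst x"
    using Well_order_least[OF is_word_Well_order[OF assms(1)] order_refl] assms(2)
    unfolding empty_word_def by blast
  thus ?thesis
    using that word_eq_letter_wconcat_least[OF assms(1)] is_word_wrestrict[OF assms(1)]
    unfolding starts_with_def by blast
qed

lemma word_iso_least:
  assumes g: "word_iso x y g" and y: "is_word y"
    and m: "m \<in> Field (fst x)" "\<forall>n\<in>Field (fst x). (m, n) \<in> fst x"
    and m': "m' \<in> Field (fst y)" "\<forall>n\<in>Field (fst y). (m', n) \<in> fst y"
  shows "g m = m'"
proof -
  obtain k where "k \<in> Field (fst x)" "m' = g k"
    using m'(1) word_isoD(2)[OF g] by blast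
  hence "(g m, m') \<in> fst y"
    using m word_isoD(4)[OF g] by blast
  moreover have "(m', g m) \<in> fst y"
    using m' word_isoD(3)[OF g m(1)] by blast
  ultimately show ?thesis
    using Well_order_antisym[OF is_word_Well_order[OF y]] by blast
qed

lemma word_eq_wconcat_letter_imp_eq:
  assumes r: "is_word r" and s: "is_word s"
    and eq: "word_eq (wconcat (letter a) r) (wconcat (letter b) s)"
  shows "a = b"
proof -
  obtain g where g: "word_iso (wconcat (letter a) r) (wconcat (letter b) s) g"
    using eq word_eq_iff_word_iso by blast
  have least: "inl_pos 0 \<in> Field (fst (wconcat (letter c) t))"
    "\<forall>n\<in>Field (fst (wconcat (letter c) t)). (inl_pos 0, n) \<in> fst (wconcat (letter c) t)" for c t
    by (auto elim!: Field_wconcat_cases)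
  have "g (inl_pos 0) = inl_pos 0"
    using word_iso_least[OF g is_word_wconcat[OF is_word_letter s] least least] .
  thus ?thesis
    using word_isoD(5)[OF g least(1)] by simp
qed

lemma starts_with_unique:
  assumes "starts_with x a" "starts_with x b" shows "a = b"
proof -
  obtain r s where "is_word r" "word_eq x (wconcat (letter a) r)"
    and "is_word s" "word_eq x (wconcat (letter b) s)"
    using assms unfolding starts_with_def by blast
  thus ?thesis
    using word_eq_wconcat_letter_imp_eq[of r s a b] word_eq_trans[OF word_eq_sym] by blast
qed

lemma starts_with_word_eq:
  assumes "starts_with x a" "word_eq y x" shows "starts_with y a"
proof -
  obtain r where "is_word r" "word_eq x (wconcat (letter a) r)"
    using assms(1) unfolding starts_with_def by blast
  with word_eq_trans[OF assms(2) this(2)] show ?thesis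
    unfolding starts_with_def by blast
qed

lemma starts_with_wconcat:
  assumes "starts_with x a" "is_word y" shows "starts_with (wconcat x y) a"
proof -
  obtain r where r: "is_word r" "word_eq x (wconcat (letter a) r)"
    using assms(1) unfolding starts_with_def by blast
  have "word_eq (wconcat x y) (wconcat (wconcat (letter a) r) y)"
    using word_eq_sym[OF word_eq_wconcat[OF word_eq_sym[OF r(2)] word_eq_refl[OF assms(2)]
          is_word_wconcat[OF is_word_letter r(1)] assms(2)]] .
  also have "word_eq \<dots> (wconcat (letter a) (wconcat r y))"
    by (rule wconcat_assoc)
  finally show ?thesis
    unfolding starts_with_def using is_word_wconcat[OF r(1) assms(2)] by (intro exI[of _ "wconcat r y"]) simp
qed

lemma starts_with_letter: "is_word r \<Longrightarrow> starts_with (wconcat (letter a) r) a"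
  unfolding starts_with_def by (intro exI[of _ r] conjI word_eq_refl is_word_wconcat is_word_letter)

lemma word_eq_wconcat_underS:
  assumes x: "is_word x" and p: "p \<in> Field (fst x)"
  obtains r where "is_word r"
    "word_eq x (wconcat (wrestrict x (underS (fst x) p)) (wconcat (letter (snd x p)) r))"
proof -
  let ?S = "underS (fst x) p" and ?F = "Field (fst x)"
  have X: "Well_order (fst x)"
    using is_word_Well_order[OF x] .
  have S: "ofilter (fst x) ?S"
    using wo_rel.underS_ofilter X by (simp add: wo_rel_def)
  let ?y = "wrestrict x (?F - ?S)"
  have y: "is_word ?y" and Fy: "Field (fst ?y) = ?F - ?S"
    using is_word_wrestrict[OF x] Field_wrestrict[OF x] by auto
  have "p \<in> Field (fst ?y)"
    using p Fy by (simp add: underS_def)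
  moreover have "\<forall>n\<in>Field (fst ?y). (p, n) \<in> fst ?y"
    using Well_order_total[OF X p] Well_order_refl[OF X p] p
    unfolding Fy by (auto simp: underS_def fst_wrestrict)
  ultimately have "word_eq ?y (wconcat (letter (snd x p)) (wrestrict ?y (Field (fst ?y) - {p})))"
    using word_eq_letter_wconcat_least[OF y] by simp
  hence "word_eq (wconcat (wrestrict x ?S) ?y)
      (wconcat (wrestrict x ?S) (wconcat (letter (snd x p)) (wrestrict ?y (Field (fst ?y) - {p}))))"
    using word_eq_wconcat[OF word_eq_refl] is_word_wrestrict[OF x] y by blast
  with word_eq_wconcat_cut[OF x S] show ?thesis
    using that is_word_wrestrict[OF y] word_eq_trans by blast
qed

lemma embed_rel_iff:
  assumes r: "Well_order r" and r': "Well_order r'" and f: "embed r r' f"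
    and "a \<in> Field r" "b \<in> Field r"
  shows "(f a, f b) \<in> r' \<longleftrightarrow> (a, b) \<in> r"
proof
  assume fab: "(f a, f b) \<in> r'"
  show "(a, b) \<in> r"
  proof (rule ccontr)
    assume "(a, b) \<notin> r"
    hence "(b, a) \<in> r" and "a \<noteq> b"
      using Well_order_total[OF r] Well_order_refl[OF r] assms(4,5) by blast+
    hence "(f b, f a) \<in> r'"
      using embed_compat[OF f] unfolding compat_def by blast
    hence "f a = f b"
      using Well_order_antisym[OF r' fab] by simp
    thus False
      using embed_inj_on[OF r f] assms(4,5) \<open>a \<noteq> b\<close> unfolding inj_on_def by blast
  qed
qed (use embed_compat[OF f] in \<open>auto simp: compat_def\<close>)

lemma word_eq_wrestrict_embed:
  assumes x: "is_word x" and y: "is_word y" and f: "embed (fst x) (fst y) f"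
    and P: "P \<subseteq> Field (fst x)" and agree: "\<And>i. i \<in> P \<Longrightarrow> snd y (f i) = snd x i"
  shows "word_eq (wrestrict x P) (wrestrict y (f ` P))"
proof (rule word_eq_wrestrictI[OF x y P])
  have X: "Well_order (fst x)" and Y: "Well_order (fst y)"
    using x y is_word_Well_order by blast+
  show "f ` P \<subseteq> Field (fst y)"
    using P embed_Field[OF f] by blast
  show "bij_betw f P (f ` P)"
    using inj_on_subset[OF embed_inj_on[OF X f] P] by (simp add: bij_betw_def)
  show "(f a, f b) \<in> fst y \<longleftrightarrow> (a, b) \<in> fst x" if "a \<in> P" "b \<in> P" for a b
    using embed_rel_iff[OF X Y f] that P by blast
qed (rule agree)

lemma str_lessI:
  assumes "a < b" "is_word c" "is_word r" "is_word s"
    and "word_eq x (wconcat c (wconcat (letter a) r))" "word_eq y (wconcat c (wconcat (letter b) s))"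
  shows "str_less x y"
  using assms unfolding str_less_def by blast

lemma str_lessE:
  assumes "str_less x y"
  obtains c a b r s where "a < b" "is_word c" "is_word r" "is_word s"
    "word_eq x (wconcat c (wconcat (letter a) r))" "word_eq y (wconcat c (wconcat (letter b) s))"
  using assms unfolding str_less_def by blast

lemma is_prefixI: "is_word z \<Longrightarrow> word_eq y (wconcat x z) \<Longrightarrow> is_prefix x y"
  unfolding is_prefix_def by blast

lemma embed_letters_imp_prefix:
  assumes x: "is_word x" and y: "is_word y" and f: "embed (fst x) (fst y) f"
    and agree: "\<And>i. i \<in> Field (fst x) \<Longrightarrow> snd y (f i) = snd x i"
  shows "is_prefix x y"
proof -
  have X: "Well_order (fst x)" and Y: "Well_order (fst y)"
    using x y is_word_Well_order by blast+
  let ?Q = "f ` Field (fst x)"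
  let ?R = "Field (fst y) - ?Q"
  have xQ: "word_eq x (wrestrict y ?Q)"
    using word_eq_wrestrict_embed[OF x y f order_refl agree] by simp
  have "word_eq y (wconcat (wrestrict y ?Q) (wrestrict y ?R))"
    using word_eq_wconcat_cut[OF y] embed_Field_ofilter[OF X Y f] by blast
  also have "word_eq \<dots> (wconcat x (wrestrict y ?R))"
    by (rule word_eq_wconcat[OF word_eq_sym[OF xQ] word_eq_refl])
      (simp_all add: is_word_wrestrict y)
  finally show ?thesis
    using is_prefixI[OF is_word_wrestrict[OF y]] by blast
qed

lemma embed_letter_mismatch_imp_str_less:
  assumes x: "is_word x" and y: "is_word y" and f: "embed (fst x) (fst y) f"
    and p: "p \<in> Field (fst x)" "snd y (f p) \<noteq> snd x p"
    and agree: "\<And>i. i \<in> underS (fst x) p \<Longrightarrow> snd y (f i) = snd x i"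
  shows "str_less x y \<or> str_less y x"
proof -
  have X: "Well_order (fst x)"
    using x is_word_Well_order by blast
  let ?P = "underS (fst x) p"
  have fP: "f ` ?P = underS (fst y) (f p)"
    using embed_underS[OF X f p(1)] by (simp add: bij_betw_def)
  obtain r where r: "is_word r"
    "word_eq x (wconcat (wrestrict x ?P) (wconcat (letter (snd x p)) r))"
    using word_eq_wconcat_underS[OF x p(1)] .
  obtain s where s: "is_word s"
    "word_eq y (wconcat (wrestrict y (f ` ?P)) (wconcat (letter (snd y (f p))) s))"
    using word_eq_wconcat_underS[OF y embed_in_Field[OF f p(1)]] unfolding fP .
  note s(2)
  also have "word_eq (wconcat (wrestrict y (f ` ?P)) (wconcat (letter (snd y (f p))) s))
      (wconcat (wrestrict x ?P) (wconcat (letter (snd y (f p))) s))"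
    by (rule word_eq_wconcat[OF word_eq_sym[OF word_eq_wrestrict_embed[OF x y f Order_Relation.underS_Field agree]]
          word_eq_refl])
      (simp_all add: is_word_wrestrict y is_word_wconcat is_word_letter s(1))
  finally have ys: "word_eq y (wconcat (wrestrict x ?P) (wconcat (letter (snd y (f p))) s))" .
  have "snd x p < snd y (f p) \<or> snd y (f p) < snd x p"
    using p(2) by auto
  thus ?thesis
    using str_lessI[OF _ is_word_wrestrict[OF x] r(1) s(1) r(2) ys]
      str_lessI[OF _ is_word_wrestrict[OF x] s(1) r(1) ys r(2)] by blast
qed

lemma embed_imp_prefix_or_str_less:
  assumes x: "is_word x" and y: "is_word y" and f: "embed (fst x) (fst y) f"
  shows "is_prefix x y \<or> str_less x y \<or> str_less y x"
proof -
  have X: "Well_order (fst x)"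
    using x is_word_Well_order by blast
  define D where "D = {i \<in> Field (fst x). snd y (f i) \<noteq> snd x i}"
  show ?thesis
  proof (cases "D = {}")
    case True
    thus ?thesis
      using embed_letters_imp_prefix[OF x y f] unfolding D_def by blast
  next
    case False
    then obtain p where p: "p \<in> D" "\<forall>i\<in>D. (p, i) \<in> fst x"
      using Well_order_least[OF X, of D] unfolding D_def by blast
    have "snd y (f i) = snd x i" if "i \<in> underS (fst x) p" for i
    proof -
      have i: "i \<noteq> p" "(i, p) \<in> fst x"
        using that by (simp_all add: underS_def)
      hence "i \<notin> D"
        using p(2) Well_order_antisym[OF X] by blast
      thus ?thesis
        using FieldI1[OF i(2)] unfolding D_def by blast
    qed
    thus ?thesis
      using embed_letter_mismatch_imp_str_less[OF x y f] p(1) unfolding D_def by blast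
  qed
qed

lemma prefix_or_str_less_cases:
  assumes x: "is_word x" and y: "is_word y"
  shows "is_prefix x y \<or> is_prefix y x \<or> str_less x y \<or> str_less y x"
  using ordLeq_total[OF is_word_Well_order[OF x] is_word_Well_order[OF y]]
    embed_imp_prefix_or_str_less[OF x y] embed_imp_prefix_or_str_less[OF y x]
  unfolding ordLeq_def by blast

section \<open>Powers\<close>

lemma prod_encode_cases:
  obtains k p where "n = prod_encode (k, p)"
  by (metis prod_decode_inverse surj_pair)

lemma wpow_rel_iff [simp]:
  "(prod_encode (k, p), prod_encode (k', p')) \<in> fst (wpow x \<alpha>) \<longleftrightarrow>
     k \<in> Field \<alpha> \<and> k' \<in> Field \<alpha> \<and> p \<in> Field (fst x) \<and> p' \<in> Field (fst x) \<and>
     ((k \<noteq> k' \<and> (k, k') \<in> \<alpha>) \<or> (k = k' \<and> (p, p') \<in> fst x))"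
  unfolding wpow_def by auto

lemma snd_wpow [simp]: "snd (wpow x \<alpha>) (prod_encode (k, p)) = snd x p"
  by (simp add: wpow_def)

lemma Field_wpow:
  assumes "is_word x"
  shows "Field (fst (wpow x \<alpha>)) = prod_encode ` (Field \<alpha> \<times> Field (fst x))"
proof
  show "Field (fst (wpow x \<alpha>)) \<subseteq> prod_encode ` (Field \<alpha> \<times> Field (fst x))"
  proof
    fix n assume "n \<in> Field (fst (wpow x \<alpha>))"
    then obtain m where "(n, m) \<in> fst (wpow x \<alpha>) \<or> (m, n) \<in> fst (wpow x \<alpha>)"
      unfolding Field_def by blast
    thus "n \<in> prod_encode ` (Field \<alpha> \<times> Field (fst x))"
      by (cases n rule: prod_encode_cases; cases m rule: prod_encode_cases) auto
  qed
  show "prod_encode ` (Field \<alpha> \<times> Field (fst x)) \<subseteq> Field (fst (wpow x \<alpha>))"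
  proof clarify
    fix k p assume "k \<in> Field \<alpha>" "p \<in> Field (fst x)"
    hence "(prod_encode (k, p), prod_encode (k, p)) \<in> fst (wpow x \<alpha>)"
      using Well_order_refl[OF is_word_Well_order[OF assms]] by simp
    thus "prod_encode (k, p) \<in> Field (fst (wpow x \<alpha>))"
      by (rule FieldI1)
  qed
qed

lemma is_word_wpow:
  assumes x: "is_word x" and \<alpha>: "Well_order \<alpha>"
  shows "is_word (wpow x \<alpha>)"
  unfolding is_word_def
proof (rule Well_orderI)
  have X: "Well_order (fst x)"
    using is_word_Well_order[OF x] .
  show "(a, c) \<in> fst (wpow x \<alpha>)" if "(a, b) \<in> fst (wpow x \<alpha>)" "(b, c) \<in> fst (wpow x \<alpha>)" for a b c
    using that Well_order_trans[OF \<alpha>] Well_order_trans[OF X] Well_order_antisym[OF \<alpha>]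
    by (cases a rule: prod_encode_cases; cases b rule: prod_encode_cases;
        cases c rule: prod_encode_cases) (simp, metis)
  show "a = b" if "(a, b) \<in> fst (wpow x \<alpha>)" "(b, a) \<in> fst (wpow x \<alpha>)" for a b
    using that Well_order_antisym[OF \<alpha>] Well_order_antisym[OF X]
    by (cases a rule: prod_encode_cases; cases b rule: prod_encode_cases) (simp, metis)
  show "\<exists>a\<in>A. \<forall>b\<in>A. (a, b) \<in> fst (wpow x \<alpha>)"
    if A: "A \<subseteq> Field (fst (wpow x \<alpha>))" "A \<noteq> {}" for A
  proof -
    let ?K = "{k. \<exists>p. prod_encode (k, p) \<in> A}"
    have AF: "A \<subseteq> prod_encode ` (Field \<alpha> \<times> Field (fst x))"
      using A(1) unfolding Field_wpow[OF x] .
    have "?K \<subseteq> Field \<alpha>" "?K \<noteq> {}"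
      using AF A(2) by auto
    then obtain k where k: "k \<in> ?K" "\<forall>k'\<in>?K. (k, k') \<in> \<alpha>"
      using Well_order_least[OF \<alpha>] by meson
    let ?P = "{p. prod_encode (k, p) \<in> A}"
    have "?P \<subseteq> Field (fst x)" "?P \<noteq> {}"
      using AF k(1) by auto
    then obtain p where p: "p \<in> ?P" "\<forall>p'\<in>?P. (p, p') \<in> fst x"
      using Well_order_least[OF X] by meson
    have "(prod_encode (k, p), b) \<in> fst (wpow x \<alpha>)" if "b \<in> A" for b
    proof -
      obtain k' p' where b: "b = prod_encode (k', p')" "k' \<in> Field \<alpha>" "p' \<in> Field (fst x)"
        using AF \<open>b \<in> A\<close> by blast
      hence "k' \<in> ?K"
        using \<open>b \<in> A\<close> by blast
      thus ?thesis
        using b k p \<open>b \<in> A\<close> AF by auto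
    qed
    thus ?thesis
      using p(1) by blast
  qed
qed

lemma wpow_Restr:
  assumes "Well_order \<alpha>"
  shows "wpow x (Restr \<alpha> K) = wrestrict (wpow x \<alpha>) (prod_encode ` (K \<times> Field (fst x)))"
  unfolding wpow_def wrestrict_def Field_Restr_Well_order[OF assms]
  by auto

lemma word_eq_wrestrict_wpow_block:
  assumes x: "is_word x" and \<alpha>: "Well_order \<alpha>" and k: "k \<in> Field \<alpha>" and U: "U \<subseteq> Field (fst x)"
  shows "word_eq (wrestrict x U) (wrestrict (wpow x \<alpha>) (prod_encode ` ({k} \<times> U)))"
proof (rule word_eq_wrestrictI[OF x is_word_wpow[OF x \<alpha>] U, where g = "\<lambda>p. prod_encode (k, p)"])
  show "prod_encode ` ({k} \<times> U) \<subseteq> Field (fst (wpow x \<alpha>))"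
    using k U unfolding Field_wpow[OF x] by blast
  show "bij_betw (\<lambda>p. prod_encode (k, p)) U (prod_encode ` ({k} \<times> U))"
    by (auto simp: bij_betw_def inj_on_def)
qed (use k U in auto)

lemma ofilter_wpow_blocks:
  assumes x: "is_word x" and K: "ofilter \<alpha> K"
  shows "ofilter (fst (wpow x \<alpha>)) (prod_encode ` (K \<times> Field (fst x)))"
proof -
  have "m \<in> prod_encode ` (K \<times> Field (fst x))"
    if "(m, prod_encode (k, p)) \<in> fst (wpow x \<alpha>)" "k \<in> K" for m k p
    using that K unfolding ofilter_def under_def
    by (cases m rule: prod_encode_cases) auto
  moreover have "K \<subseteq> Field \<alpha>"
    using K unfolding ofilter_def by blast
  ultimately show ?thesis
    unfolding ofilter_def under_def Field_wpow[OF x] by blast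
qed

lemma underS_wpow:
  assumes x: "is_word x" and \<alpha>: "Well_order \<alpha>" and k: "k \<in> Field \<alpha>" and p: "p \<in> Field (fst x)"
  shows "underS (fst (wpow x \<alpha>)) (prod_encode (k, p)) =
    prod_encode ` (underS \<alpha> k \<times> Field (fst x)) \<union> prod_encode ` ({k} \<times> underS (fst x) p)"
proof -
  have "n \<in> underS (fst (wpow x \<alpha>)) (prod_encode (k, p)) \<longleftrightarrow>
    n \<in> prod_encode ` (underS \<alpha> k \<times> Field (fst x)) \<union> prod_encode ` ({k} \<times> underS (fst x) p)" for n
    using k p by (cases n rule: prod_encode_cases)
      (auto simp: underS_def intro: FieldI1)
  thus ?thesis
    by blast
qed

lemma word_eq_wrestrict_wpow_underS:
  assumes x: "is_word x" and \<alpha>: "Well_order \<alpha>" and k: "k \<in> Field \<alpha>" and p: "p \<in> Field (fst x)"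
  shows "word_eq (wrestrict (wpow x \<alpha>) (underS (fst (wpow x \<alpha>)) (prod_encode (k, p))))
    (wconcat (wpow x (Restr \<alpha> (underS \<alpha> k))) (wrestrict x (underS (fst x) p)))"
proof -
  let ?W = "wpow x \<alpha>" and ?T = "underS (fst (wpow x \<alpha>)) (prod_encode (k, p))"
    and ?B = "prod_encode ` (underS \<alpha> k \<times> Field (fst x))"
    and ?C = "prod_encode ` ({k} \<times> underS (fst x) p)"
  have w: "is_word ?W"
    using is_word_wpow[OF x \<alpha>] .
  have B: "ofilter (fst ?W) ?B" and T: "ofilter (fst ?W) ?T"
    using ofilter_wpow_blocks[OF x wo_rel.underS_ofilter] wo_rel.underS_ofilter
      \<alpha> is_word_Well_order[OF w] by (simp_all add: wo_rel_def)
  have "?T = ?B \<union> ?C"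
    using underS_wpow[OF x \<alpha> k p] .
  hence "?B \<subseteq> ?T" "?T - ?B = ?C"
    by (auto simp: underS_def)
  hence "word_eq (wrestrict ?W ?T) (wconcat (wrestrict ?W ?B) (wrestrict ?W ?C))"
    using word_eq_wrestrict_nested_cuts(1)[OF w B T] by simp
  also have "word_eq \<dots> (wconcat (wpow x (Restr \<alpha> (underS \<alpha> k))) (wrestrict x (underS (fst x) p)))"
    unfolding wpow_Restr[OF \<alpha>, symmetric]
    by (rule word_eq_wconcat[OF word_eq_refl word_eq_sym])
      (simp_all add: word_eq_wrestrict_wpow_block[OF x \<alpha> k] Order_Relation.underS_Field
        is_word_wpow[OF x] Well_order_Restr[OF \<alpha>] is_word_wrestrict[OF x] is_word_wrestrict[OF w])
  finally show ?thesis .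
qed

lemma word_eq_wrestrict_wpow_not_underS:
  assumes x: "is_word x" and \<alpha>: "Well_order \<alpha>" and k: "k \<in> Field \<alpha>" and p: "p \<in> Field (fst x)"
  defines "W \<equiv> wpow x \<alpha>"
  shows "word_eq (wrestrict W (Field (fst W) - underS (fst W) (prod_encode (k, p))))
    (wconcat (wrestrict x (Field (fst x) - underS (fst x) p))
      (wrestrict W (Field (fst W) - prod_encode ` (under \<alpha> k \<times> Field (fst x)))))"
proof -
  let ?T = "underS (fst W) (prod_encode (k, p))" and ?B' = "prod_encode ` (under \<alpha> k \<times> Field (fst x))"
  have w: "is_word W"
    unfolding W_def using is_word_wpow[OF x \<alpha>] .
  have B': "ofilter (fst W) ?B'" and T: "ofilter (fst W) ?T"
    unfolding W_def using ofilter_wpow_blocks[OF x wo_rel.under_ofilter] wo_rel.underS_ofilter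
      \<alpha> is_word_Well_order[OF w] by (simp_all add: wo_rel_def W_def)
  have under: "under \<alpha> k = underS \<alpha> k \<union> {k}"
    using Refl_under_underS[OF _ k] \<alpha> by (simp add: wo_rel.REFL wo_rel_def)
  have T_eq: "?T = prod_encode ` (underS \<alpha> k \<times> Field (fst x) \<union> {k} \<times> underS (fst x) p)"
    unfolding W_def underS_wpow[OF x \<alpha> k p] by blast
  have "?B' - ?T = prod_encode ` (under \<alpha> k \<times> Field (fst x) -
      (underS \<alpha> k \<times> Field (fst x) \<union> {k} \<times> underS (fst x) p))"
    unfolding T_eq by (rule image_set_diff[OF inj_prod_encode, symmetric])
  also have "\<dots> = prod_encode ` ({k} \<times> (Field (fst x) - underS (fst x) p))"
    unfolding under using underS_notIn[of k \<alpha>] by auto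
  finally have "?B' - ?T = prod_encode ` ({k} \<times> (Field (fst x) - underS (fst x) p))" .
  moreover have "?T \<subseteq> ?B'"
    unfolding T_eq under using Order_Relation.underS_Field[of "fst x" p] by auto
  ultimately have "word_eq (wrestrict W (Field (fst W) - ?T))
      (wconcat (wrestrict W (prod_encode ` ({k} \<times> (Field (fst x) - underS (fst x) p))))
        (wrestrict W (Field (fst W) - ?B')))"
    using word_eq_wrestrict_nested_cuts(2)[OF w T B'] by simp
  also have "word_eq \<dots> (wconcat (wrestrict x (Field (fst x) - underS (fst x) p)) (wrestrict W (Field (fst W) - ?B')))"
    unfolding W_def
    by (rule word_eq_wconcat[OF word_eq_sym word_eq_refl])
      (simp_all add: word_eq_wrestrict_wpow_block[OF x \<alpha> k] is_word_wpow[OF x \<alpha>] is_word_wrestrict)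
  finally show ?thesis .
qed

lemma word_eq_wpow_wconcatE:
  assumes x: "is_word x" and \<alpha>: "Well_order \<alpha>" and c: "is_word c" and e: "is_word e"
    and ne: "\<not> empty_word e" and eq: "word_eq (wpow x \<alpha>) (wconcat c e)"
  obtains \<beta> f g h where "Well_order \<beta>" "is_word f" "is_word g" "is_word h" "\<not> empty_word g"
    "word_eq x (wconcat f g)" "word_eq c (wconcat (wpow x \<beta>) f)" "word_eq e (wconcat g h)"
proof -
  let ?W = "wpow x \<alpha>"
  have w: "is_word ?W"
    using is_word_wpow[OF x \<alpha>] .
  obtain T where T: "ofilter (fst ?W) T" and cT: "word_eq c (wrestrict ?W T)"
    and eT: "word_eq e (wrestrict ?W (Field (fst ?W) - T))"
    using word_eq_wconcat_cutE[OF w c e eq] .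
  have "T \<noteq> Field (fst ?W)"
    using ne word_eq_empty_word[OF eT] Field_wrestrict[OF w] unfolding empty_word_def by auto
  then obtain n where "n \<in> Field (fst ?W)" "T = underS (fst ?W) n"
    using wo_rel.ofilter_underS_Field[of "fst ?W" T] T is_word_Well_order[OF w]
    by (auto simp: wo_rel_def)
  then obtain k p where k: "k \<in> Field \<alpha>" and p: "p \<in> Field (fst x)"
    and Tkp: "T = underS (fst ?W) (prod_encode (k, p))"
    unfolding Field_wpow[OF x] by blast
  let ?f = "wrestrict x (underS (fst x) p)" and ?g = "wrestrict x (Field (fst x) - underS (fst x) p)"
  have "ofilter (fst x) (underS (fst x) p)"
    using wo_rel.underS_ofilter is_word_Well_order[OF x] by (simp add: wo_rel_def)
  hence "word_eq x (wconcat ?f ?g)"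
    by (rule word_eq_wconcat_cut[OF x])
  moreover have "\<not> empty_word ?g"
    using p Field_wrestrict[OF x] unfolding empty_word_def underS_def by blast
  ultimately show ?thesis
    using that[OF Well_order_Restr[OF \<alpha>] is_word_wrestrict[OF x] is_word_wrestrict[OF x] is_word_wrestrict[OF w]]
      word_eq_trans[OF cT word_eq_wrestrict_wpow_underS[OF x \<alpha> k p, folded Tkp]]
      word_eq_trans[OF eT word_eq_wrestrict_wpow_not_underS[OF x \<alpha> k p, folded Tkp]]
    by blast
qed

lemma empty_word_wpow: "Field \<alpha> = {} \<Longrightarrow> empty_word (wpow x \<alpha>)"
  unfolding empty_word_def wpow_def Field_def by auto

lemma word_eq_wpow_wconcat_head:
  assumes x: "is_word x" and \<alpha>: "Well_order \<alpha>" and ne: "Field \<alpha> \<noteq> {}"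
  obtains w where "is_word w" "word_eq (wpow x \<alpha>) (wconcat x w)"
proof -
  let ?W = "wpow x \<alpha>"
  obtain k where k: "k \<in> Field \<alpha>" "\<forall>k'\<in>Field \<alpha>. (k, k') \<in> \<alpha>"
    using Well_order_least[OF \<alpha> order_refl ne] by blast
  have "under \<alpha> k = {k}"
    using k Well_order_antisym[OF \<alpha>] by (auto simp: under_def intro: FieldI1)
  hence "ofilter (fst ?W) (prod_encode ` ({k} \<times> Field (fst x)))"
    using ofilter_wpow_blocks[OF x wo_rel.under_ofilter[of \<alpha> k]] \<alpha> by (simp add: wo_rel_def)
  hence "word_eq ?W (wconcat (wrestrict ?W (prod_encode ` ({k} \<times> Field (fst x))))
      (wrestrict ?W (Field (fst ?W) - prod_encode ` ({k} \<times> Field (fst x)))))"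
    by (rule word_eq_wconcat_cut[OF is_word_wpow[OF x \<alpha>]])
  also have "word_eq \<dots> (wconcat x (wrestrict ?W (Field (fst ?W) - prod_encode ` ({k} \<times> Field (fst x)))))"
    by (rule word_eq_wconcat[OF word_eq_sym word_eq_refl])
      (use word_eq_wrestrict_wpow_block[OF x \<alpha> k(1) order_refl] in
        \<open>simp_all add: is_word_wrestrict is_word_wpow x \<alpha>\<close>)
  finally show ?thesis
    using that is_word_wrestrict[OF is_word_wpow[OF x \<alpha>]] by blast
qed

section \<open>Lexicographic order\<close>

lemma lex_less_wconcat:
  assumes "is_word x" "is_word y" "\<not> empty_word y"
  shows "lex_less x (wconcat x y)"
proof -
  have "is_prefix x (wconcat x y)"
    using is_prefixI[OF assms(2) word_eq_refl[OF is_word_wconcat[OF assms(1,2)]]] .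
  moreover have "\<not> word_eq x (wconcat x y)"
    using word_eq_wconcat_self_imp_empty[OF assms(1,2)] assms(3) by blast
  ultimately show ?thesis
    unfolding lex_less_def lex_le_def by blast
qed

lemma word_eq_wconcat_letter_extend:
  assumes "word_eq x (wconcat c (wconcat (letter a) r))" "is_word c" "is_word r" "is_word t"
  shows "word_eq (wconcat x t) (wconcat c (wconcat (letter a) (wconcat r t)))"
proof -
  have ar: "is_word (wconcat (letter a) r)"
    using is_word_wconcat[OF is_word_letter assms(3)] .
  have "word_eq (wconcat x t) (wconcat (wconcat c (wconcat (letter a) r)) t)"
    using word_eq_sym[OF word_eq_wconcat[OF word_eq_sym[OF assms(1)] word_eq_refl[OF assms(4)]
          is_word_wconcat[OF assms(2) ar] assms(4)]] .
  also have "word_eq \<dots> (wconcat c (wconcat (wconcat (letter a) r) t))"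
    by (rule wconcat_assoc)
  also have "word_eq \<dots> (wconcat c (wconcat (letter a) (wconcat r t)))"
    by (rule word_eq_wconcat[OF word_eq_refl wconcat_assoc])
      (simp_all add: assms(2,4) ar is_word_wconcat)
  finally show ?thesis .
qed

lemma word_eq_wconcat_letter_cancel:
  assumes "is_word c" "is_word r" "is_word s"
    and "word_eq (wconcat c (wconcat (letter a) r)) (wconcat c (wconcat (letter b) s))"
  shows "a = b"
  using word_eq_wconcat_letter_imp_eq[OF assms(2,3)]
    word_eq_wconcat_cancel_left[OF assms(1) is_word_wconcat[OF is_word_letter assms(2)]
      is_word_wconcat[OF is_word_letter assms(3)] assms(4)] .

lemma word_eq_letter_wconcat_starts_with:
  assumes "is_word e" "is_word t" "\<not> empty_word e"
    and "word_eq (wconcat (letter a) r) (wconcat e t)" "is_word r"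
  shows "starts_with e a"
proof -
  obtain h where h: "starts_with e h"
    using starts_with_exists[OF assms(1,3)] .
  have "starts_with (wconcat (letter a) r) h"
    using starts_with_word_eq[OF starts_with_wconcat[OF h assms(2)] assms(4)] .
  hence "a = h"
    by (rule starts_with_unique[OF starts_with_letter[OF assms(5)]])
  thus ?thesis
    using h by simp
qed

lemma str_less_word_eq_left:
  assumes "str_less x y" "word_eq x' x"
  shows "str_less x' y"
proof -
  obtain c a b r s where "a < b" "is_word c" "is_word r" "is_word s"
    "word_eq x (wconcat c (wconcat (letter a) r))" "word_eq y (wconcat c (wconcat (letter b) s))"
    using assms(1) by (rule str_lessE)
  from str_lessI[OF this(1-4) word_eq_trans[OF assms(2) this(5)] this(6)] show ?thesis .
qed

lemma str_less_wconcat_left: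
  assumes "str_less x y" "is_word t"
  shows "str_less (wconcat x t) y"
proof -
  obtain c a b r s where "a < b" "is_word c" "is_word r" "is_word s"
    "word_eq x (wconcat c (wconcat (letter a) r))" "word_eq y (wconcat c (wconcat (letter b) s))"
    using assms(1) by (rule str_lessE)
  from str_lessI[OF this(1,2) is_word_wconcat[OF this(3) assms(2)] this(4)
      word_eq_wconcat_letter_extend[OF this(5,2,3) assms(2)] this(6)]
  show ?thesis .
qed

lemma word_eq_imp_is_prefix: "is_word x \<Longrightarrow> word_eq y x \<Longrightarrow> is_prefix x y"
  using is_prefixI[OF is_word_empty_tword]
    word_eq_trans[OF _ word_eq_sym[OF wconcat_empty_right[OF empty_word_empty_tword _ is_word_empty_tword]]]
  by blast

lemma not_lex_le_proper_prefix:
  assumes v: "is_word v" and w: "is_word w" and s: "is_word s" and ne: "\<not> empty_word s"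
    and eq: "word_eq v (wconcat w s)"
  shows "\<not> lex_le v w"
  unfolding lex_le_def
proof (intro notI, elim disjE)
  assume "is_prefix v w"
  then obtain r where r: "is_word r" "word_eq w (wconcat v r)"
    unfolding is_prefix_def by blast
  have "word_eq v (wconcat (wconcat v r) s)"
    using word_eq_trans[OF eq word_eq_wconcat[OF r(2) word_eq_refl[OF s] w s]] .
  also have "word_eq \<dots> (wconcat v (wconcat r s))"
    by (rule wconcat_assoc)
  finally have "empty_word (wconcat r s)"
    using word_eq_wconcat_self_imp_empty[OF v is_word_wconcat[OF r(1) s]] by blast
  thus False
    using ne empty_word_wconcat_iff by blast
next
  assume "str_less v w"
  then obtain c a b z z' where cz: "a < b" "is_word c" "is_word z" "is_word z'"
    "word_eq v (wconcat c (wconcat (letter a) z))" "word_eq w (wconcat c (wconcat (letter b) z'))"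
    by (rule str_lessE)
  have "word_eq (wconcat c (wconcat (letter a) z)) (wconcat c (wconcat (letter b) (wconcat z' s)))"
    using word_eq_trans[OF word_eq_sym[OF cz(5)] word_eq_trans[OF eq
          word_eq_wconcat_letter_extend[OF cz(6,2,4) s]]] .
  thus False
    using word_eq_wconcat_letter_cancel[OF cz(2,3) is_word_wconcat[OF cz(4) s]] cz(1) by blast
qed

lemma word_eq_wconcat_reassoc:
  assumes "word_eq x (wconcat c d)" "word_eq c (wconcat c' e)" "is_word c" "is_word c'" "is_word d" "is_word e"
  shows "word_eq x (wconcat c' (wconcat e d))"
proof -
  note assms(1)
  also have "word_eq (wconcat c d) (wconcat (wconcat c' e) d)"
    by (rule word_eq_wconcat[OF assms(2) word_eq_refl[OF assms(5)] assms(3,5)])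
  also have "word_eq \<dots> (wconcat c' (wconcat e d))"
    by (rule wconcat_assoc)
  finally show ?thesis .
qed

lemma word_eq_letter_decompositionsE:
  assumes c: "is_word c" and r: "is_word r" and c': "is_word c'" and r': "is_word r'"
    and eq: "word_eq (wconcat c (wconcat (letter a) r)) (wconcat c' (wconcat (letter a') r'))"
  obtains (same) "word_eq c' c" "a = a'"
  | (left) q where "is_word q" "word_eq c' (wconcat c (wconcat (letter a) q))"
  | (right) q where "is_word q" "word_eq c (wconcat c' (wconcat (letter a') q))"
proof -
  have wl: "is_word (wconcat (letter l) t)" if "is_word t" for l t
    using is_word_wconcat[OF is_word_letter that] .
  have prefix_letter: "\<exists>q. is_word q \<and> word_eq d (wconcat b (wconcat (letter l) q))"
    if b: "is_word b" and e: "is_word e" "\<not> empty_word e" and de: "word_eq d (wconcat b e)"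
      and t: "is_word t" and u: "is_word u" and lt: "word_eq (wconcat (letter l) t) (wconcat e u)"
    for b d e l t u
  proof -
    obtain q where q: "is_word q" "word_eq e (wconcat (letter l) q)"
      using word_eq_letter_wconcat_starts_with[OF e(1) u e(2) lt t] unfolding starts_with_def by blast
    show ?thesis
      using q(1) word_eq_trans[OF de word_eq_wconcat[OF word_eq_refl[OF b] q(2) b e(1)]]
      by (intro exI[of _ q] conjI)
  qed
  show ?thesis
    using c wl[OF r] c' wl[OF r'] eq
  proof (rule word_eq_wconcat_wconcatE)
    fix e assume e: "is_word e" "word_eq c' (wconcat c e)"
      and ar: "word_eq (wconcat (letter a) r) (wconcat e (wconcat (letter a') r'))"
    show ?thesis
    proof (cases "empty_word e")
      case True
      have "word_eq c' c"
        using word_eq_trans[OF e(2) wconcat_empty_right[OF True c e(1)]] .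
      moreover have "a = a'"
        using word_eq_wconcat_letter_imp_eq[OF r r' word_eq_trans[OF ar wconcat_empty_left[OF True e(1) wl[OF r']]]] .
      ultimately show ?thesis
        by (rule same)
    next
      case False
      thus ?thesis
        using left prefix_letter[OF c e(1) False e(2) r wl[OF r'] ar] by blast
    qed
  next
    fix e assume e: "is_word e" "\<not> empty_word e" "word_eq c (wconcat c' e)"
      and ar': "word_eq (wconcat (letter a') r') (wconcat e (wconcat (letter a) r))"
    show ?thesis
      using right prefix_letter[OF c' e(1) e(2,3) r' wl[OF r] ar'] by blast
  qed
qed

lemma str_less_asym:
  assumes "str_less x y" shows "\<not> str_less y x"
proof
  assume "str_less y x"
  obtain c a b r s where ab: "a < b" and c: "is_word c" and r: "is_word r" and s: "is_word s"
    and x: "word_eq x (wconcat c (wconcat (letter a) r))"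
    and y: "word_eq y (wconcat c (wconcat (letter b) s))"
    using assms by (rule str_lessE)
  obtain c' a' b' r' s' where ab': "a' < b'" and c': "is_word c'" and r': "is_word r'"
    and s': "is_word s'" and y': "word_eq y (wconcat c' (wconcat (letter a') r'))"
    and x': "word_eq x (wconcat c' (wconcat (letter b') s'))"
    using \<open>str_less y x\<close> by (rule str_lessE)
  have wl: "is_word (wconcat (letter l) t)" if "is_word t" for l t
    using is_word_wconcat[OF is_word_letter that] .
  have eqy: "word_eq (wconcat c (wconcat (letter b) s)) (wconcat c' (wconcat (letter a') r'))"
    using word_eq_trans[OF word_eq_sym[OF y] y'] .
  show False
    using c r c' s' word_eq_trans[OF word_eq_sym[OF x] x']
  proof (rule word_eq_letter_decompositionsE)
    assume "word_eq c' c" "a = b'"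
    have "word_eq (wconcat c (wconcat (letter b) s)) (wconcat c (wconcat (letter a') r'))"
      using word_eq_trans[OF eqy word_eq_wconcat[OF \<open>word_eq c' c\<close> word_eq_refl[OF wl[OF r']] c' wl[OF r']]] .
    hence "b = a'"
      using word_eq_wconcat_letter_cancel[OF c s r'] by blast
    thus False
      using ab ab' \<open>a = b'\<close> by simp
  next
    fix q assume q: "is_word q" "word_eq c' (wconcat c (wconcat (letter a) q))"
    have "word_eq (wconcat c (wconcat (letter b) s)) (wconcat c (wconcat (letter a) (wconcat q (wconcat (letter a') r'))))"
      using word_eq_trans[OF eqy word_eq_wconcat_letter_extend[OF q(2) c q(1) wl[OF r']]] .
    hence "b = a"
      by (rule word_eq_wconcat_letter_cancel[OF c s is_word_wconcat[OF q(1) wl[OF r']]])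
    thus False
      using ab by simp
  next
    fix q assume q: "is_word q" "word_eq c (wconcat c' (wconcat (letter b') q))"
    have "word_eq (wconcat c' (wconcat (letter a') r')) (wconcat c' (wconcat (letter b') (wconcat q (wconcat (letter b) s))))"
      using word_eq_trans[OF word_eq_sym[OF eqy] word_eq_wconcat_letter_extend[OF q(2) c' q(1) wl[OF s]]] .
    hence "a' = b'"
      by (rule word_eq_wconcat_letter_cancel[OF c' r' is_word_wconcat[OF q(1) wl[OF s]]])
    thus False
      using ab' by simp
  qed
qed

lemma str_less_imp_not_lex_le:
  assumes "str_less z v" shows "\<not> lex_le v z"
  unfolding lex_le_def
proof (intro notI, elim disjE)
  assume "is_prefix v z"
  then obtain s where s: "is_word s" "word_eq z (wconcat v s)"
    unfolding is_prefix_def by blast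
  obtain c a b r r' where cr: "a < b" "is_word c" "is_word r" "is_word r'"
    "word_eq z (wconcat c (wconcat (letter a) r))" "word_eq v (wconcat c (wconcat (letter b) r'))"
    using assms by (rule str_lessE)
  have "word_eq (wconcat c (wconcat (letter a) r)) (wconcat c (wconcat (letter b) (wconcat r' s)))"
    using word_eq_trans[OF word_eq_sym[OF cr(5)] word_eq_trans[OF s(2)
          word_eq_wconcat_letter_extend[OF cr(6,2,4) s(1)]]] .
  thus False
    using word_eq_wconcat_letter_cancel[OF cr(2,3) is_word_wconcat[OF cr(4) s(1)]] cr(1) by blast
next
  assume "str_less v z"
  thus False
    using str_less_asym[OF assms] by blast
qed

lemma lex_le_suffix:
  assumes suf: "\<And>z. proper_suffix z v \<Longrightarrow> lex_le v z" and v: "is_word v"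
    and y: "is_word y" and z: "is_word z" and ne: "\<not> empty_word z" and eq: "word_eq v (wconcat y z)"
  shows "lex_le v z"
proof (cases "empty_word y")
  case True
  have "word_eq z v"
    using word_eq_sym[OF word_eq_trans[OF eq wconcat_empty_left[OF True y z]]] .
  hence "is_prefix v z"
    by (rule word_eq_imp_is_prefix[OF v])
  thus ?thesis
    unfolding lex_le_def by blast
next
  case False
  thus ?thesis
    using suf y z ne eq unfolding proper_suffix_def by blast
qed

section \<open>Prime words\<close>

lemma primitive_nonempty:
  assumes "is_word x" "primitive x" shows "\<not> empty_word x"
proof
  assume "empty_word x"
  hence "word_eq x (wpow x {})"
    using empty_word_word_eq empty_word_wpow[of "{}" x] by simp
  moreover have "Well_order ({} :: nat rel)"
    by (rule Well_orderI) auto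
  ultimately have "card (Field ({} :: nat rel)) = 1"
    using assms unfolding primitive_def by blast
  thus False
    by simp
qed

lemma primitive_word_eq_wpow:
  "primitive v \<Longrightarrow> is_word u \<Longrightarrow> Well_order \<beta> \<Longrightarrow> word_eq v (wpow u \<beta>) \<Longrightarrow> word_eq u v"
  unfolding primitive_def by blast

lemma prime_word_not_str_less_suffix:
  assumes "prime_word v" "is_word y" "is_word z" "\<not> empty_word z" "word_eq v (wconcat y z)"
  shows "\<not> str_less z v"
  using assms lex_le_suffix[of v y z] str_less_imp_not_lex_le unfolding prime_word_def by blast

lemma prime_word_no_border:
  assumes "prime_word v" "is_word y" "is_word f" "is_word s" "\<not> empty_word f" "\<not> empty_word s"
    and "word_eq v (wconcat y f)" "word_eq v (wconcat f s)"
  shows False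
  using assms lex_le_suffix[of v y f] not_lex_le_proper_prefix[of v f s] unfolding prime_word_def
  by blast

lemma word_eq_wpow_wconcat_letterE:
  assumes x: "is_word x" and \<alpha>: "Well_order \<alpha>" and c: "is_word c" and e: "is_word e" "\<not> empty_word e"
    and eq: "word_eq (wpow x \<alpha>) (wconcat c e)" and b: "starts_with e b"
  obtains \<beta> f g where "Well_order \<beta>" "is_word f" "is_word g"
    "word_eq x (wconcat f (wconcat (letter b) g))" "word_eq c (wconcat (wpow x \<beta>) f)"
proof -
  obtain \<beta> f g h where fgh: "Well_order \<beta>" "is_word f" "is_word g" "is_word h" "\<not> empty_word g"
    "word_eq x (wconcat f g)" "word_eq c (wconcat (wpow x \<beta>) f)" "word_eq e (wconcat g h)"
    using word_eq_wpow_wconcatE[OF x \<alpha> c e eq] .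
  obtain b' where b': "starts_with g b'"
    using starts_with_exists[OF fgh(3,5)] .
  have "b' = b"
    using starts_with_unique[OF starts_with_word_eq[OF starts_with_wconcat[OF b' fgh(4)] fgh(8)] b] .
  then obtain g' where g': "is_word g'" "word_eq g (wconcat (letter b) g')"
    using b' unfolding starts_with_def by blast
  show ?thesis
    using that[OF fgh(1,2) g'(1) word_eq_trans[OF fgh(6) word_eq_wconcat[OF word_eq_refl[OF fgh(2)] g'(2) fgh(2,3)]] fgh(7)] .
qed

lemma not_str_less_wpow_wconcat:
  assumes pv: "prime_word v" and u: "is_word u" and t: "is_word t" and vt: "word_eq v (wconcat u t)"
    and \<alpha>: "Well_order \<alpha>"
  shows "\<not> str_less v (wconcat (wpow u \<alpha>) v)"
proof
  let ?P = "wpow u \<alpha>"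
  have v: "is_word v"
    using pv unfolding prime_word_def by blast
  have P: "is_word ?P"
    using is_word_wpow[OF u \<alpha>] .
  have wl: "is_word (wconcat (letter l) x)" if "is_word x" for l x
    using is_word_wconcat[OF is_word_letter that] .
  assume "str_less v (wconcat ?P v)"
  then obtain c a b r r' where ab: "a < b" and c: "is_word c" and r: "is_word r" and r': "is_word r'"
    and vc: "word_eq v (wconcat c (wconcat (letter a) r))"
    and Pv: "word_eq (wconcat ?P v) (wconcat c (wconcat (letter b) r'))"
    by (rule str_lessE)
  show False
    using P v c wl[OF r'] Pv
  proof (rule word_eq_wconcat_wconcatE)
    fix e assume e: "is_word e" "word_eq c (wconcat ?P e)" "word_eq v (wconcat e (wconcat (letter b) r'))"
    let ?z = "wconcat e (wconcat (letter a) r)"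
    have "str_less ?z v"
      using str_lessI[OF ab e(1) r r' word_eq_refl[OF is_word_wconcat[OF e(1) wl[OF r]]] e(3)] .
    moreover have "word_eq v (wconcat ?P ?z)"
      using word_eq_wconcat_reassoc[OF vc e(2) c P wl[OF r] e(1)] .
    ultimately show False
      using prime_word_not_str_less_suffix[OF pv P is_word_wconcat[OF e(1) wl[OF r]]]
      by (simp add: empty_word_wconcat_iff)
  next
    fix e assume e: "is_word e" "\<not> empty_word e" "word_eq ?P (wconcat c e)"
      and br': "word_eq (wconcat (letter b) r') (wconcat e v)"
    obtain \<beta> f g where fg: "Well_order \<beta>" "is_word f" "is_word g"
      "word_eq u (wconcat f (wconcat (letter b) g))" "word_eq c (wconcat (wpow u \<beta>) f)"
      using word_eq_wpow_wconcat_letterE[OF u \<alpha> c e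
          word_eq_letter_wconcat_starts_with[OF e(1) v e(2) br' r']] .
    let ?z = "wconcat f (wconcat (letter a) r)"
    have "word_eq v (wconcat f (wconcat (letter b) (wconcat g t)))"
      using word_eq_trans[OF vt word_eq_wconcat_letter_extend[OF fg(4,2,3) t]] .
    hence "str_less ?z v"
      using str_lessI[OF ab fg(2) r is_word_wconcat[OF fg(3) t] word_eq_refl[OF is_word_wconcat[OF fg(2) wl[OF r]]]]
      by blast
    moreover have "word_eq v (wconcat (wpow u \<beta>) ?z)"
      using word_eq_wconcat_reassoc[OF vc fg(5) c is_word_wpow[OF u fg(1)] wl[OF r] fg(2)] .
    ultimately show False
      using prime_word_not_str_less_suffix[OF pv is_word_wpow[OF u fg(1)] is_word_wconcat[OF fg(2) wl[OF r]]]
      by (simp add: empty_word_wconcat_iff)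
  qed
qed

lemma prefix_wpow_wconcat_imp_word_eq:
  assumes pv: "prime_word v" and u: "is_word u" and t: "is_word t" and vt: "word_eq v (wconcat u t)"
    and uv: "\<not> word_eq u v" and \<alpha>: "Well_order \<alpha>" and pre: "is_prefix v (wconcat (wpow u \<alpha>) v)"
  shows "word_eq (wconcat (wpow u \<alpha>) v) v"
proof -
  let ?P = "wpow u \<alpha>"
  have v: "is_word v" and not_pow: "\<And>\<beta>. Well_order \<beta> \<Longrightarrow> \<not> word_eq v (wpow u \<beta>)"
    using pv primitive_word_eq_wpow[OF _ u] uv unfolding prime_word_def by blast+
  have P: "is_word ?P"
    using is_word_wpow[OF u \<alpha>] .
  obtain s where s: "is_word s" "word_eq (wconcat ?P v) (wconcat v s)"
    using pre unfolding is_prefix_def by blast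
  show ?thesis
  proof (cases "empty_word s")
    case True
    show ?thesis
      using word_eq_trans[OF s(2) wconcat_empty_right[OF True v s(1)]] .
  next
    case False
    show ?thesis
      using P v v s(1) s(2)
    proof (rule word_eq_wconcat_wconcatE)
      fix e assume e: "is_word e" "word_eq v (wconcat ?P e)" "word_eq v (wconcat e s)"
      show ?thesis
      proof (cases "empty_word e")
        case True
        thus ?thesis
          using not_pow[OF \<alpha>] word_eq_trans[OF e(2) wconcat_empty_right[OF True P e(1)]] by blast
      qed (use prime_word_no_border[OF pv P e(1) s(1) _ False e(2,3)] in blast)
    next
      fix e assume e: "is_word e" "\<not> empty_word e" "word_eq ?P (wconcat v e)"
      obtain \<beta> f g h where fgh: "Well_order \<beta>" "is_word f" "is_word g" "is_word h" "\<not> empty_word g"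
        "word_eq u (wconcat f g)" "word_eq v (wconcat (wpow u \<beta>) f)" "word_eq e (wconcat g h)"
        using word_eq_wpow_wconcatE[OF u \<alpha> v e] .
      have vf: "word_eq v (wconcat f (wconcat g t))"
        using word_eq_wconcat_reassoc[OF vt fgh(6) u fgh(2) t fgh(3)] .
      show ?thesis
      proof (cases "empty_word f")
        case True
        thus ?thesis
          using not_pow[OF fgh(1)] word_eq_trans[OF fgh(7) wconcat_empty_right[OF True is_word_wpow[OF u fgh(1)] fgh(2)]]
          by blast
      qed (use prime_word_no_border[OF pv is_word_wpow[OF u fgh(1)] fgh(2) is_word_wconcat[OF fgh(3) t] _ _ fgh(7) vf]
          fgh(5) in \<open>simp add: empty_word_wconcat_iff\<close>)
    qed
  qed
qed

lemma lex_le_wpow_wconcat_of_prefix: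
  assumes pv: "prime_word v" and u: "is_word u" and pre: "is_prefix u v" and uv: "\<not> word_eq u v"
    and \<alpha>: "Well_order \<alpha>"
  shows "lex_le (wconcat (wpow u \<alpha>) v) v"
proof -
  let ?x = "wconcat (wpow u \<alpha>) v"
  have v: "is_word v"
    using pv unfolding prime_word_def by blast
  obtain t where t: "is_word t" "word_eq v (wconcat u t)"
    using pre unfolding is_prefix_def by blast
  have "is_prefix ?x v \<or> is_prefix v ?x \<or> str_less ?x v \<or> str_less v ?x"
    using prefix_or_str_less_cases[OF is_word_wconcat[OF is_word_wpow[OF u \<alpha>] v] v] .
  moreover have "is_prefix ?x v" if "is_prefix v ?x"
    using word_eq_imp_is_prefix[OF is_word_wconcat[OF is_word_wpow[OF u \<alpha>] v]]
      word_eq_sym[OF prefix_wpow_wconcat_imp_word_eq[OF pv u t uv \<alpha> that]] .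
  ultimately show ?thesis
    using not_str_less_wpow_wconcat[OF pv u t \<alpha>] unfolding lex_le_def by blast
qed

lemma lex_le_wpow_wconcat_of_str_less:
  assumes uv: "str_less u v" and u: "is_word u" and v: "is_word v" and \<alpha>: "Well_order \<alpha>"
  shows "lex_le (wconcat (wpow u \<alpha>) v) v"
proof (cases "Field \<alpha> = {}")
  case True
  have "word_eq (wconcat (wpow u \<alpha>) v) v"
    using wconcat_empty_left[OF empty_word_wpow[OF True] is_word_wpow[OF u \<alpha>] v] .
  hence "is_prefix (wconcat (wpow u \<alpha>) v) v"
    by (rule word_eq_imp_is_prefix[OF is_word_wconcat[OF is_word_wpow[OF u \<alpha>] v] word_eq_sym])
  thus ?thesis
    unfolding lex_le_def by blast
next
  case False
  obtain w where w: "is_word w" "word_eq (wpow u \<alpha>) (wconcat u w)"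
    using word_eq_wpow_wconcat_head[OF u \<alpha> False] .
  have "word_eq (wconcat (wpow u \<alpha>) v) (wconcat (wconcat u w) v)"
    by (rule word_eq_wconcat[OF w(2) word_eq_refl]) (simp_all add: is_word_wpow u v \<alpha>)
  also have "word_eq \<dots> (wconcat u (wconcat w v))"
    by (rule wconcat_assoc)
  finally have "str_less (wconcat (wpow u \<alpha>) v) v"
    using str_less_word_eq_left str_less_wconcat_left[OF uv is_word_wconcat[OF w(1) v]] by blast
  thus ?thesis
    unfolding lex_le_def by blast
qed

theorem mainTheorem10:
  fixes u v :: "'a::{finite,linorder} tword" and \<alpha> :: "nat rel"
  assumes "prime_word u" and "prime_word v" and "lex_less u v"
    and "Well_order \<alpha>"
  shows "lex_less (wpow u \<alpha>) (wconcat (wpow u \<alpha>) v) \<and> lex_le (wconcat (wpow u \<alpha>) v) v"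
proof -
  have u: "is_word u" and v: "is_word v" and vne: "\<not> empty_word v"
    using assms(1,2) primitive_nonempty unfolding prime_word_def by blast+
  have "is_prefix u v \<or> str_less u v" and uv: "\<not> word_eq u v"
    using assms(3) unfolding lex_less_def lex_le_def by blast+
  thus ?thesis
    using lex_less_wconcat[OF is_word_wpow[OF u assms(4)] v vne]
      lex_le_wpow_wconcat_of_prefix[OF assms(2) u _ uv assms(4)]
      lex_le_wpow_wconcat_of_str_less[OF _ u v assms(4)] by blast
qed

end
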